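(* Let $\mathbf{L}=(L,\le)$ be a finite lattice with more than two elements (least element $0$, greatest element $1$) and let $(R,\vee,\circ)$ be a subsemiring of $(\mathrm{Res}_1(\mathbf{L}),\vee,\circ)$ such that (i) $f_{a,0}\in R$ for every $a\in L\setminus\{1\}$; (ii) for every $f\in R$ there exists $a\in L\setminus\{1\}$ with $f_{a,0}\le f$ (pointwise); (iii) for all $a\in L\setminus\{0,1\}$ and all $b\in L$ there exists $f\in R$ with $f(a)=b$. Then $(R,\vee,\circ)$ is a finite simple additively idempotent semiring whose greatest element is right but not left absorbing. Conversely, every finite simple additively idempotent semiring $(S,+,\cdot)$ with $|S|>2$ whose greatest element is right but not left absorbing is isomorphic to such a semiring $(R,\vee,\circ)$ for some such lattice $\mathbf{L}$.
   Context: A semiring is a nonempty set with a commutative semigroup operation $+$ and a semigroup operation $\cdot$ satisfying both distributive laws. It is simple if its only congruences are the identity and the full relation; additively idempotent if $r+r=r$; then $x\le y:\Leftrightarrow x+y=y$ is a partial order, and for finite semirings the greatest element is the sum of all elements. An element $r$ is right absorbing if $sr=r$ for all $s$, left absorbing if $rs=r$ for all $s$. For a finite lattice $\mathbf{L}$, $\mathrm{Res}_1(\mathbf{L})$ is the set of maps $f:L\to L$ preserving binary joins with $f(0)=0$ and $f(1)=1$, a semiring under pointwise join and composition. For $a,b\in L$, $f_{a,b}:L\to L$ is defined by $f_{a,b}(x)=b$ if $x\le a$ and $f_{a,b}(x)=1$ otherwise. *)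

theory Defs
  imports Main "HOL-Library.FuncSet"
begin

definition semiring :: "'a set \<Rightarrow> ('a \<Rightarrow> 'a \<Rightarrow> 'a) \<Rightarrow> ('a \<Rightarrow> 'a \<Rightarrow> 'a) \<Rightarrow> bool" where
  "semiring S add mul \<longleftrightarrow> S \<noteq> {} \<and>
     (\<forall>x\<in>S. \<forall>y\<in>S. add x y \<in> S \<and> mul x y \<in> S) \<and>
     (\<forall>x\<in>S. \<forall>y\<in>S. \<forall>z\<in>S. add (add x y) z = add x (add y z)) \<and>
     (\<forall>x\<in>S. \<forall>y\<in>S. add x y = add y x) \<and>
     (\<forall>x\<in>S. \<forall>y\<in>S. \<forall>z\<in>S. mul (mul x y) z = mul x (mul y z)) \<and>
     (\<forall>x\<in>S. \<forall>y\<in>S. \<forall>z\<in>S. mul x (add y z) = add (mul x y) (mul x z)) \<and>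
     (\<forall>x\<in>S. \<forall>y\<in>S. \<forall>z\<in>S. mul (add x y) z = add (mul x z) (mul y z))"

definition semiring_congruence ::
  "'a set \<Rightarrow> ('a \<Rightarrow> 'a \<Rightarrow> 'a) \<Rightarrow> ('a \<Rightarrow> 'a \<Rightarrow> 'a) \<Rightarrow> 'a rel \<Rightarrow> bool" where
  "semiring_congruence S add mul r \<longleftrightarrow> equiv S r \<and>
     (\<forall>x y u v. (x, y) \<in> r \<longrightarrow> (u, v) \<in> r \<longrightarrow>
        (add x u, add y v) \<in> r \<and> (mul x u, mul y v) \<in> r)"

definition simple_semiring :: "'a set \<Rightarrow> ('a \<Rightarrow> 'a \<Rightarrow> 'a) \<Rightarrow> ('a \<Rightarrow> 'a \<Rightarrow> 'a) \<Rightarrow> bool" where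
  "simple_semiring S add mul \<longleftrightarrow>
     (\<forall>r. semiring_congruence S add mul r \<longrightarrow> r = Id_on S \<or> r = S \<times> S)"

definition add_idempotent :: "'a set \<Rightarrow> ('a \<Rightarrow> 'a \<Rightarrow> 'a) \<Rightarrow> bool" where
  "add_idempotent S add \<longleftrightarrow> (\<forall>x\<in>S. add x x = x)"

definition greatest_elem :: "'a set \<Rightarrow> ('a \<Rightarrow> 'a \<Rightarrow> 'a) \<Rightarrow> 'a \<Rightarrow> bool" where
  "greatest_elem S add g \<longleftrightarrow> g \<in> S \<and> (\<forall>x\<in>S. add x g = g)"

definition right_absorbing :: "'a set \<Rightarrow> ('a \<Rightarrow> 'a \<Rightarrow> 'a) \<Rightarrow> 'a \<Rightarrow> bool" where
  "right_absorbing S mul r \<longleftrightarrow> (\<forall>s\<in>S. mul s r = r)"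

definition left_absorbing :: "'a set \<Rightarrow> ('a \<Rightarrow> 'a \<Rightarrow> 'a) \<Rightarrow> 'a \<Rightarrow> bool" where
  "left_absorbing S mul r \<longleftrightarrow> (\<forall>s\<in>S. mul r s = r)"

definition semiring_iso ::
  "('a \<Rightarrow> 'b) \<Rightarrow> 'a set \<Rightarrow> ('a \<Rightarrow> 'a \<Rightarrow> 'a) \<Rightarrow> ('a \<Rightarrow> 'a \<Rightarrow> 'a)
     \<Rightarrow> 'b set \<Rightarrow> ('b \<Rightarrow> 'b \<Rightarrow> 'b) \<Rightarrow> ('b \<Rightarrow> 'b \<Rightarrow> 'b) \<Rightarrow> bool" where
  "semiring_iso \<phi> S add mul T add' mul' \<longleftrightarrow> bij_betw \<phi> S T \<and>
     (\<forall>x\<in>S. \<forall>y\<in>S. \<phi> (add x y) = add' (\<phi> x) (\<phi> y) \<and> \<phi> (mul x y) = mul' (\<phi> x) (\<phi> y))"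

definition is_lub :: "'b set \<Rightarrow> ('b \<Rightarrow> 'b \<Rightarrow> bool) \<Rightarrow> 'b \<Rightarrow> 'b \<Rightarrow> 'b \<Rightarrow> bool" where
  "is_lub L le x y z \<longleftrightarrow> z \<in> L \<and> le x z \<and> le y z \<and> (\<forall>w\<in>L. le x w \<and> le y w \<longrightarrow> le z w)"

definition is_glb :: "'b set \<Rightarrow> ('b \<Rightarrow> 'b \<Rightarrow> bool) \<Rightarrow> 'b \<Rightarrow> 'b \<Rightarrow> 'b \<Rightarrow> bool" where
  "is_glb L le x y z \<longleftrightarrow> z \<in> L \<and> le z x \<and> le z y \<and> (\<forall>w\<in>L. le w x \<and> le w y \<longrightarrow> le w z)"

definition finite_lattice_on :: "'b set \<Rightarrow> ('b \<Rightarrow> 'b \<Rightarrow> bool) \<Rightarrow> bool" where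
  "finite_lattice_on L le \<longleftrightarrow> finite L \<and> L \<noteq> {} \<and>
     (\<forall>x\<in>L. le x x) \<and>
     (\<forall>x\<in>L. \<forall>y\<in>L. le x y \<and> le y x \<longrightarrow> x = y) \<and>
     (\<forall>x\<in>L. \<forall>y\<in>L. \<forall>z\<in>L. le x y \<and> le y z \<longrightarrow> le x z) \<and>
     (\<forall>x\<in>L. \<forall>y\<in>L. (\<exists>z. is_lub L le x y z) \<and> (\<exists>z. is_glb L le x y z))"

definition ljoin :: "'b set \<Rightarrow> ('b \<Rightarrow> 'b \<Rightarrow> bool) \<Rightarrow> 'b \<Rightarrow> 'b \<Rightarrow> 'b" where
  "ljoin L le x y = (THE z. is_lub L le x y z)"

definition lbot :: "'b set \<Rightarrow> ('b \<Rightarrow> 'b \<Rightarrow> bool) \<Rightarrow> 'b" where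
  "lbot L le = (THE z. z \<in> L \<and> (\<forall>x\<in>L. le z x))"

definition ltop :: "'b set \<Rightarrow> ('b \<Rightarrow> 'b \<Rightarrow> bool) \<Rightarrow> 'b" where
  "ltop L le = (THE z. z \<in> L \<and> (\<forall>x\<in>L. le x z))"

text \<open>Maps L -> L are represented as extensional functions (value undefined off L).\<close>

definition Res1 :: "'b set \<Rightarrow> ('b \<Rightarrow> 'b \<Rightarrow> bool) \<Rightarrow> ('b \<Rightarrow> 'b) set" where
  "Res1 L le = {f \<in> L \<rightarrow>\<^sub>E L.
      (\<forall>x\<in>L. \<forall>y\<in>L. f (ljoin L le x y) = ljoin L le (f x) (f y)) \<and>
      f (lbot L le) = lbot L le \<and> f (ltop L le) = ltop L le}"

definition fjoin :: "'b set \<Rightarrow> ('b \<Rightarrow> 'b \<Rightarrow> bool) \<Rightarrow> ('b \<Rightarrow> 'b) \<Rightarrow> ('b \<Rightarrow> 'b) \<Rightarrow> ('b \<Rightarrow> 'b)" where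
  "fjoin L le f g = (\<lambda>x\<in>L. ljoin L le (f x) (g x))"

definition fcomp :: "'b set \<Rightarrow> ('b \<Rightarrow> 'b) \<Rightarrow> ('b \<Rightarrow> 'b) \<Rightarrow> ('b \<Rightarrow> 'b)" where
  "fcomp L f g = compose L f g"

definition subsemiring_Res1 :: "'b set \<Rightarrow> ('b \<Rightarrow> 'b \<Rightarrow> bool) \<Rightarrow> ('b \<Rightarrow> 'b) set \<Rightarrow> bool" where
  "subsemiring_Res1 L le R \<longleftrightarrow> R \<noteq> {} \<and> R \<subseteq> Res1 L le \<and>
     (\<forall>f\<in>R. \<forall>g\<in>R. fjoin L le f g \<in> R \<and> fcomp L f g \<in> R)"

definition fab :: "'b set \<Rightarrow> ('b \<Rightarrow> 'b \<Rightarrow> bool) \<Rightarrow> 'b \<Rightarrow> 'b \<Rightarrow> ('b \<Rightarrow> 'b)" where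
  "fab L le a b = (\<lambda>x\<in>L. if le x a then b else ltop L le)"

definition good_pair :: "'b set \<Rightarrow> ('b \<Rightarrow> 'b \<Rightarrow> bool) \<Rightarrow> ('b \<Rightarrow> 'b) set \<Rightarrow> bool" where
  "good_pair L le R \<longleftrightarrow>
     finite_lattice_on L le \<and> card L > 2 \<and> subsemiring_Res1 L le R \<and>
     (\<forall>a\<in>L - {ltop L le}. fab L le a (lbot L le) \<in> R) \<and>
     (\<forall>f\<in>R. \<exists>a\<in>L - {ltop L le}. \<forall>x\<in>L. le (fab L le a (lbot L le) x) (f x)) \<and>
     (\<forall>a\<in>L - {lbot L le, ltop L le}. \<forall>b\<in>L. \<exists>f\<in>R. f a = b)"

end

theory Submission
  imports Defs
begin

text \<open>
  In a subsemiring \<open>R\<close> of \<open>Res\<^sub>1(L)\<close> satisfying (i)--(iii), the map \<open>f\<^sub>0\<^sub>,\<^sub>0\<close> is the greatest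
  element; it is absorbing on the right, and not on the left since \<open>f\<^sub>0\<^sub>,\<^sub>0 \<circ> f\<^sub>a\<^sub>,\<^sub>0\<close> vanishes at \<open>a\<close>.
  A nontrivial congruence identifies, after composing with a suitable \<open>f\<^sub>a\<^sub>,\<^sub>0\<close>, a two-valued map that
  is \<open>1\<close> at some \<open>x\<close> with a map that is \<open>0\<close> at \<open>x\<close>. Composing with maps from (iii) and joining, every
  \<open>f\<^sub>w\<^sub>,\<^sub>0\<close> is then identified with some \<open>f\<^sub>w\<^sub>'\<^sub>,\<^sub>0\<close>, \<open>w' < w\<close>, hence with \<open>f\<^sub>0\<^sub>,\<^sub>0\<close>; by (ii) so is every
  element of \<open>R\<close>, and the congruence is total.

  Conversely, let \<open>A\<close> be the set of right absorbing elements of \<open>S\<close> ordered by \<open>x \<le> y \<longleftrightarrow> x + y = y\<close>,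
  with a new least element adjoined. Right multiplication by \<open>s\<close> is join preserving on it, and its upper
  adjoint, read in the dual lattice \<open>L\<close>, lies in \<open>Res\<^sub>1(L)\<close>; the upper adjoint of an absorbing element
  \<open>h\<close> is \<open>f\<^sub>h\<^sub>,\<^sub>0\<close>. This is a homomorphism \<open>S \<rightarrow> Res\<^sub>1(L)\<close>, and simplicity, applied to suitable kernel
  and Rees congruences, makes it injective and yields conditions (ii) and (iii).
\<close>

lemma finite_join_closed_has_greatest:
  assumes "finite D" "D \<noteq> {}"
    and refl: "\<And>x. x \<in> D \<Longrightarrow> le x x"
    and join: "\<And>x y. x \<in> D \<Longrightarrow> y \<in> D \<Longrightarrow> jn x y \<in> D \<and> le x (jn x y) \<and> le y (jn x y)"
    and trans: "\<And>x y z. x \<in> D \<Longrightarrow> y \<in> D \<Longrightarrow> z \<in> D \<Longrightarrow> le x y \<Longrightarrow> le y z \<Longrightarrow> le x z"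
  shows "\<exists>m\<in>D. \<forall>z\<in>D. le z m"
proof -
  have "F \<subseteq> D \<Longrightarrow> \<exists>m\<in>D. \<forall>z\<in>F. le z m" if "finite F" "F \<noteq> {}" for F
    using that
  proof (induction F rule: finite_ne_induct)
    case (singleton x)
    then show ?case using refl by auto
  next
    case (insert x F)
    then obtain m where m: "m \<in> D" "\<forall>z\<in>F. le z m" by auto
    have x: "x \<in> D" using insert.prems by simp
    with m join[OF x m(1)] show ?case by (metis insert_iff trans insert.prems subsetD)
  qed
  then show ?thesis using assms(1,2) by blast
qed

section \<open>Congruences of semirings\<close>

lemma semiring_congruence_subset: "semiring_congruence S add mul r \<Longrightarrow> r \<subseteq> S \<times> S"
  unfolding semiring_congruence_def by (blast dest: equiv_type)

lemma semiring_congruence_refl: "semiring_congruence S add mul r \<Longrightarrow> x \<in> S \<Longrightarrow> (x, x) \<in> r"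
  unfolding semiring_congruence_def by (blast elim: equivE dest: refl_onD)

lemma semiring_congruence_sym: "semiring_congruence S add mul r \<Longrightarrow> (x, y) \<in> r \<Longrightarrow> (y, x) \<in> r"
  unfolding semiring_congruence_def by (blast elim: equivE dest: symD)

lemma semiring_congruence_trans:
  "semiring_congruence S add mul r \<Longrightarrow> (x, y) \<in> r \<Longrightarrow> (y, z) \<in> r \<Longrightarrow> (x, z) \<in> r"
  unfolding semiring_congruence_def by (blast elim: equivE dest: transD)

lemma semiring_congruence_add:
  "semiring_congruence S add mul r \<Longrightarrow> (x, y) \<in> r \<Longrightarrow> (u, v) \<in> r \<Longrightarrow> (add x u, add y v) \<in> r"
  unfolding semiring_congruence_def by blast

lemma semiring_congruence_mul:
  "semiring_congruence S add mul r \<Longrightarrow> (x, y) \<in> r \<Longrightarrow> (u, v) \<in> r \<Longrightarrow> (mul x u, mul y v) \<in> r"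
  unfolding semiring_congruence_def by blast

lemma simple_semiring_inj_on:
  assumes "semiring S add mul" "simple_semiring S add mul"
    and compat: "\<And>x y u v. x \<in> S \<Longrightarrow> y \<in> S \<Longrightarrow> u \<in> S \<Longrightarrow> v \<in> S \<Longrightarrow>
        \<kappa> x = \<kappa> y \<Longrightarrow> \<kappa> u = \<kappa> v \<Longrightarrow> \<kappa> (add x u) = \<kappa> (add y v) \<and> \<kappa> (mul x u) = \<kappa> (mul y v)"
    and "s \<in> S" "t \<in> S" "\<kappa> s \<noteq> \<kappa> t"
  shows "inj_on \<kappa> S"
proof -
  define r where "r = {(x, y). x \<in> S \<and> y \<in> S \<and> \<kappa> x = \<kappa> y}"
  have closed: "add x y \<in> S" "mul x y \<in> S" if "x \<in> S" "y \<in> S" for x y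
    using that \<open>semiring S add mul\<close> unfolding semiring_def by auto
  have "equiv S r"
    unfolding r_def equiv_def refl_on_def sym_def trans_def by auto
  moreover have "(add x u, add y v) \<in> r \<and> (mul x u, mul y v) \<in> r" if "(x, y) \<in> r" "(u, v) \<in> r" for x y u v
    using that compat closed unfolding r_def by auto
  ultimately have "semiring_congruence S add mul r"
    unfolding semiring_congruence_def by blast
  moreover have "r \<noteq> S \<times> S"
    using assms(4-6) unfolding r_def by blast
  ultimately have "r = Id_on S"
    using \<open>simple_semiring S add mul\<close> unfolding simple_semiring_def by blast
  then show ?thesis
    unfolding inj_on_def r_def by auto
qed

lemma semiring_congruence_Rees:
  assumes "semiring S add mul" "I \<subseteq> S"
    and ideal: "\<And>s t. s \<in> I \<Longrightarrow> t \<in> S \<Longrightarrow> add s t \<in> I \<and> mul s t \<in> I \<and> mul t s \<in> I"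
  shows "semiring_congruence S add mul (Id_on S \<union> I \<times> I)"
  unfolding semiring_congruence_def
proof (intro conjI allI impI)
  show "equiv S (Id_on S \<union> I \<times> I)"
    using \<open>I \<subseteq> S\<close> unfolding equiv_def refl_on_def sym_def trans_def by auto
  fix x y u v assume xy: "(x, y) \<in> Id_on S \<union> I \<times> I" and uv: "(u, v) \<in> Id_on S \<union> I \<times> I"
  have closed: "add x y \<in> S" "mul x y \<in> S" if "x \<in> S" "y \<in> S" for x y
    using that \<open>semiring S add mul\<close> unfolding semiring_def by auto
  have add_comm: "add x y = add y x" if "x \<in> S" "y \<in> S" for x y
    using that \<open>semiring S add mul\<close> unfolding semiring_def by auto
  consider "x = y" "x \<in> S" "u = v" "u \<in> S" | "x \<in> I" "y \<in> I" "u \<in> S" "v \<in> S"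
    | "x \<in> S" "y \<in> S" "u \<in> I" "v \<in> I"
    using xy uv \<open>I \<subseteq> S\<close> by auto
  then have "(add x u, add y v) \<in> Id_on S \<union> I \<times> I \<and> (mul x u, mul y v) \<in> Id_on S \<union> I \<times> I"
  proof cases
    case 1
    then show ?thesis using closed by auto
  next
    case 2
    then show ?thesis using ideal[of x u] ideal[of y v] by auto
  next
    case 3
    then have "add x u = add u x" "add y v = add v y"
      using add_comm \<open>I \<subseteq> S\<close> by auto
    then show ?thesis using 3 ideal[of u x] ideal[of v y] by auto
  qed
  then show "(add x u, add y v) \<in> Id_on S \<union> I \<times> I" "(mul x u, mul y v) \<in> Id_on S \<union> I \<times> I"
    by blast+
qed

lemma simple_semiring_ideal_eq_carrier:
  assumes "semiring S add mul" "simple_semiring S add mul" "I \<subseteq> S"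
    and ideal: "\<And>s t. s \<in> I \<Longrightarrow> t \<in> S \<Longrightarrow> add s t \<in> I \<and> mul s t \<in> I \<and> mul t s \<in> I"
    and "a \<in> I" "b \<in> I" "a \<noteq> b"
  shows "I = S"
proof -
  have "Id_on S \<union> I \<times> I \<noteq> Id_on S"
    using assms(5-7) by blast
  then have "Id_on S \<union> I \<times> I = S \<times> S"
    using semiring_congruence_Rees[OF assms(1,3) ideal] \<open>simple_semiring S add mul\<close>
    unfolding simple_semiring_def by blast
  then have "(s, a) \<in> Id_on S \<union> I \<times> I" if "s \<in> S" for s
    using that \<open>I \<subseteq> S\<close> \<open>a \<in> I\<close> by blast
  then show ?thesis
    using \<open>I \<subseteq> S\<close> \<open>a \<in> I\<close> by (auto simp: Id_on_iff)
qed

section \<open>Finite lattices and \<open>Res\<^sub>1\<close>\<close>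

definition lmeet :: "'b set \<Rightarrow> ('b \<Rightarrow> 'b \<Rightarrow> bool) \<Rightarrow> 'b \<Rightarrow> 'b \<Rightarrow> 'b" where
  "lmeet L le x y = (THE z. is_glb L le x y z)"

locale fin_lattice =
  fixes L :: "'b set" and le :: "'b \<Rightarrow> 'b \<Rightarrow> bool"
  assumes finite_lattice: "finite_lattice_on L le"
begin

abbreviation "Bot \<equiv> lbot L le"
abbreviation "Top \<equiv> ltop L le"

lemma finite_carrier: "finite L"
  and carrier_nonempty: "L \<noteq> {}"
  and lat_refl: "x \<in> L \<Longrightarrow> le x x"
  and lat_antisym: "x \<in> L \<Longrightarrow> y \<in> L \<Longrightarrow> le x y \<Longrightarrow> le y x \<Longrightarrow> x = y"
  and lat_trans: "x \<in> L \<Longrightarrow> y \<in> L \<Longrightarrow> z \<in> L \<Longrightarrow> le x y \<Longrightarrow> le y z \<Longrightarrow> le x z"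
  and lub_exists: "x \<in> L \<Longrightarrow> y \<in> L \<Longrightarrow> \<exists>z. is_lub L le x y z"
  and glb_exists: "x \<in> L \<Longrightarrow> y \<in> L \<Longrightarrow> \<exists>z. is_glb L le x y z"
  using finite_lattice unfolding finite_lattice_on_def by blast+

lemma eq_if_same_upper_bounds:
  "u \<in> L \<Longrightarrow> v \<in> L \<Longrightarrow> (\<And>w. w \<in> L \<Longrightarrow> le u w \<longleftrightarrow> le v w) \<Longrightarrow> u = v"
  by (meson lat_antisym lat_refl)

lemma ljoin_lub: "x \<in> L \<Longrightarrow> y \<in> L \<Longrightarrow> is_lub L le x y (ljoin L le x y)"
  unfolding ljoin_def by (rule theI') (use lub_exists lat_antisym in \<open>auto simp: is_lub_def\<close>)

lemma lmeet_glb: "x \<in> L \<Longrightarrow> y \<in> L \<Longrightarrow> is_glb L le x y (lmeet L le x y)"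
  unfolding lmeet_def by (rule theI') (use glb_exists lat_antisym in \<open>auto simp: is_glb_def\<close>)

lemma ljoin_eq: "x \<in> L \<Longrightarrow> y \<in> L \<Longrightarrow> is_lub L le x y z \<Longrightarrow> ljoin L le x y = z"
  using ljoin_lub lat_antisym unfolding is_lub_def by blast

lemma ljoin_closed: "x \<in> L \<Longrightarrow> y \<in> L \<Longrightarrow> ljoin L le x y \<in> L"
  and ljoin_upper1: "x \<in> L \<Longrightarrow> y \<in> L \<Longrightarrow> le x (ljoin L le x y)"
  and ljoin_upper2: "x \<in> L \<Longrightarrow> y \<in> L \<Longrightarrow> le y (ljoin L le x y)"
  and ljoin_least: "x \<in> L \<Longrightarrow> y \<in> L \<Longrightarrow> w \<in> L \<Longrightarrow> le x w \<Longrightarrow> le y w \<Longrightarrow> le (ljoin L le x y) w"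
  using ljoin_lub unfolding is_lub_def by blast+

lemma ljoin_le_iff:
  "x \<in> L \<Longrightarrow> y \<in> L \<Longrightarrow> w \<in> L \<Longrightarrow> le (ljoin L le x y) w \<longleftrightarrow> le x w \<and> le y w"
  by (meson lat_trans ljoin_closed ljoin_least ljoin_upper1 ljoin_upper2)

lemma ljoin_comm: "x \<in> L \<Longrightarrow> y \<in> L \<Longrightarrow> ljoin L le x y = ljoin L le y x"
  by (rule eq_if_same_upper_bounds) (auto simp: ljoin_closed ljoin_le_iff)

lemma ljoin_assoc:
  "x \<in> L \<Longrightarrow> y \<in> L \<Longrightarrow> z \<in> L \<Longrightarrow> ljoin L le (ljoin L le x y) z = ljoin L le x (ljoin L le y z)"
  by (rule eq_if_same_upper_bounds) (auto simp: ljoin_closed ljoin_le_iff)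

lemma ljoin_absorb: "x \<in> L \<Longrightarrow> y \<in> L \<Longrightarrow> le x y \<Longrightarrow> ljoin L le x y = y"
  by (rule eq_if_same_upper_bounds) (simp_all add: ljoin_closed ljoin_le_iff, meson lat_trans)

lemma ljoin_absorb2: "x \<in> L \<Longrightarrow> y \<in> L \<Longrightarrow> le y x \<Longrightarrow> ljoin L le x y = x"
  using ljoin_absorb ljoin_comm by metis

lemma ljoin_idem: "x \<in> L \<Longrightarrow> ljoin L le x x = x"
  by (simp add: ljoin_absorb lat_refl)

lemma ltop_greatest: "Top \<in> L \<and> (\<forall>x\<in>L. le x Top)"
proof -
  have "\<exists>m\<in>L. \<forall>z\<in>L. le z m"
    by (rule finite_join_closed_has_greatest[where jn = "ljoin L le"])
      (simp_all add: finite_carrier carrier_nonempty lat_refl ljoin_closed ljoin_upper1 ljoin_upper2,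
        meson lat_trans)
  then have "\<exists>!m. m \<in> L \<and> (\<forall>z\<in>L. le z m)"
    using lat_antisym by blast
  then show ?thesis
    unfolding ltop_def by (rule theI')
qed

lemma lbot_least: "Bot \<in> L \<and> (\<forall>x\<in>L. le Bot x)"
proof -
  have "\<exists>m\<in>L. \<forall>z\<in>L. le m z"
  proof (rule finite_join_closed_has_greatest[where jn = "lmeet L le" and le = "\<lambda>x y. le y x"])
    show "lmeet L le x y \<in> L \<and> le (lmeet L le x y) x \<and> le (lmeet L le x y) y"
      if "x \<in> L" "y \<in> L" for x y
      using lmeet_glb[OF that] unfolding is_glb_def by blast
  qed (simp_all add: finite_carrier carrier_nonempty lat_refl, meson lat_trans)
  then have "\<exists>!m. m \<in> L \<and> (\<forall>z\<in>L. le m z)"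
    using lat_antisym by blast
  then show ?thesis
    unfolding lbot_def by (rule theI')
qed

lemma Top_in: "Top \<in> L" and le_Top: "x \<in> L \<Longrightarrow> le x Top"
  and Bot_in: "Bot \<in> L" and Bot_le: "x \<in> L \<Longrightarrow> le Bot x"
  using ltop_greatest lbot_least by blast+

lemma le_Bot_iff: "x \<in> L \<Longrightarrow> le x Bot \<longleftrightarrow> x = Bot"
  using lat_antisym Bot_le Bot_in lat_refl by blast

lemma ljoin_Top: "x \<in> L \<Longrightarrow> ljoin L le x Top = Top"
  and ljoin_Top2: "x \<in> L \<Longrightarrow> ljoin L le Top x = Top"
  by (simp_all add: ljoin_absorb ljoin_absorb2 le_Top Top_in)

lemma ljoin_eq_Bot_iff: "x \<in> L \<Longrightarrow> y \<in> L \<Longrightarrow> ljoin L le x y = Bot \<longleftrightarrow> x = Bot \<and> y = Bot"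
  using ljoin_upper1[of x y] ljoin_upper2[of x y] ljoin_closed[of x y] le_Bot_iff ljoin_idem Bot_in
  by auto

lemma Res1_closed: "f \<in> Res1 L le \<Longrightarrow> x \<in> L \<Longrightarrow> f x \<in> L"
  and Res1_extensional: "f \<in> Res1 L le \<Longrightarrow> f \<in> extensional L"
  and Res1_ljoin: "f \<in> Res1 L le \<Longrightarrow> x \<in> L \<Longrightarrow> y \<in> L \<Longrightarrow>
      f (ljoin L le x y) = ljoin L le (f x) (f y)"
  and Res1_Bot: "f \<in> Res1 L le \<Longrightarrow> f Bot = Bot"
  and Res1_Top: "f \<in> Res1 L le \<Longrightarrow> f Top = Top"
  unfolding Res1_def by (auto simp: PiE_iff)

lemma Res1_mono: "f \<in> Res1 L le \<Longrightarrow> x \<in> L \<Longrightarrow> y \<in> L \<Longrightarrow> le x y \<Longrightarrow> le (f x) (f y)"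
  by (metis Res1_closed Res1_ljoin ljoin_absorb ljoin_upper1)

text \<open>The kernel of a join-preserving map is join-closed, hence a principal down-set.\<close>

lemma Res1_kernel_principal:
  assumes f: "f \<in> Res1 L le"
  obtains w where "w \<in> L" "\<And>y. y \<in> L \<Longrightarrow> f y = Bot \<longleftrightarrow> le y w"
proof -
  define K where "K = {y \<in> L. f y = Bot}"
  have "\<exists>w\<in>K. \<forall>y\<in>K. le y w"
  proof (rule finite_join_closed_has_greatest[where jn = "ljoin L le"])
    show "finite K" "K \<noteq> {}"
      using finite_carrier Bot_in Res1_Bot[OF f] unfolding K_def by auto
    show "ljoin L le x y \<in> K \<and> le x (ljoin L le x y) \<and> le y (ljoin L le x y)"
      if "x \<in> K" "y \<in> K" for x y
      using that Res1_ljoin[OF f] ljoin_closed ljoin_upper1 ljoin_upper2 ljoin_idem Bot_in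
      unfolding K_def by auto
  qed (use lat_refl lat_trans in \<open>auto simp: K_def\<close>)
  then obtain w where w: "w \<in> K" "\<And>y. y \<in> K \<Longrightarrow> le y w"
    by blast
  have "f y = Bot \<longleftrightarrow> le y w" if "y \<in> L" for y
  proof
    assume "le y w"
    then have "le (f y) (f w)"
      using Res1_mono[OF f] that w(1) unfolding K_def by blast
    then show "f y = Bot"
      using w(1) le_Bot_iff Res1_closed[OF f that] unfolding K_def by simp
  qed (use that w(2) K_def in blast)
  then show thesis
    using that w(1) unfolding K_def by blast
qed

lemma fab_apply: "x \<in> L \<Longrightarrow> fab L le a b x = (if le x a then b else Top)"
  unfolding fab_def by simp

lemma Res1_two_valued_eq_fab:
  assumes f: "f \<in> Res1 L le" and two: "\<And>y. y \<in> L \<Longrightarrow> f y = Bot \<or> f y = Top"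
  obtains w where "w \<in> L" "f = fab L le w Bot"
proof -
  obtain w where w: "w \<in> L" "\<And>y. y \<in> L \<Longrightarrow> f y = Bot \<longleftrightarrow> le y w"
    using Res1_kernel_principal[OF f] by blast
  have "f = fab L le w Bot"
    by (rule extensionalityI[OF Res1_extensional[OF f]])
      (use two w in \<open>auto simp: fab_def fab_apply\<close>)
  with w(1) show thesis
    using that by blast
qed

end

lemma fcomp_apply: "x \<in> L \<Longrightarrow> fcomp L f h x = f (h x)"
  unfolding fcomp_def compose_def by simp

lemma fjoin_apply: "x \<in> L \<Longrightarrow> fjoin L le f h x = ljoin L le (f x) (h x)"
  unfolding fjoin_def by simp

lemma fab_extensional: "fab L le a b \<in> extensional L"
  and fcomp_extensional: "fcomp L f h \<in> extensional L"
  and fjoin_extensional: "fjoin L le f h \<in> extensional L"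
  unfolding fab_def fcomp_def compose_def fjoin_def by simp_all

section \<open>Subsemirings of \<open>Res\<^sub>1\<close> satisfying (i)--(iii)\<close>

locale res_subsemiring =
  fixes L :: "'b set" and le :: "'b \<Rightarrow> 'b \<Rightarrow> bool" and R :: "('b \<Rightarrow> 'b) set"
  assumes good: "good_pair L le R"
begin

sublocale fin_lattice L le
  using good unfolding good_pair_def by unfold_locales blast

abbreviation "f00 \<equiv> fab L le Bot Bot"

lemma card_carrier: "card L > 2"
  and R_nonempty: "R \<noteq> {}"
  and R_Res1: "f \<in> R \<Longrightarrow> f \<in> Res1 L le"
  and R_fjoin: "f \<in> R \<Longrightarrow> h \<in> R \<Longrightarrow> fjoin L le f h \<in> R"
  and R_fcomp: "f \<in> R \<Longrightarrow> h \<in> R \<Longrightarrow> fcomp L f h \<in> R"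
  and fab_in_R: "a \<in> L \<Longrightarrow> a \<noteq> Top \<Longrightarrow> fab L le a Bot \<in> R"
  and fab_below: "f \<in> R \<Longrightarrow> \<exists>a\<in>L - {Top}. \<forall>x\<in>L. le (fab L le a Bot x) (f x)"
  and R_hits: "a \<in> L \<Longrightarrow> a \<noteq> Bot \<Longrightarrow> a \<noteq> Top \<Longrightarrow> b \<in> L \<Longrightarrow> \<exists>f\<in>R. f a = b"
  using good unfolding good_pair_def subsemiring_Res1_def by blast+

lemma R_closed: "f \<in> R \<Longrightarrow> x \<in> L \<Longrightarrow> f x \<in> L"
  using Res1_closed R_Res1 by blast

lemma R_extensional: "f \<in> R \<Longrightarrow> f \<in> extensional L"
  using Res1_extensional R_Res1 by blast

lemma Bot_neq_Top: "Bot \<noteq> Top"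
proof
  assume "Bot = Top"
  then have "x = Bot" if "x \<in> L" for x
    using that Bot_le[OF that] le_Top[OF that] lat_antisym[OF that Bot_in] by simp
  then have "L \<subseteq> {Bot}"
    by blast
  then have "card L \<le> 1"
    using card_mono[of "{Bot}" L] by simp
  then show False
    using card_carrier by simp
qed

lemma exists_middle: "\<exists>a\<in>L. a \<noteq> Bot \<and> a \<noteq> Top"
proof (rule ccontr)
  assume "\<not> ?thesis"
  then have "L \<subseteq> {Bot, Top}"
    by blast
  then have "card L \<le> card {Bot, Top}"
    by (intro card_mono) auto
  also have "\<dots> \<le> 2"
    by (simp add: card_insert_le_m1)
  finally show False
    using card_carrier by simp
qed

lemma f00_apply: "x \<in> L \<Longrightarrow> f00 x = (if x = Bot then Bot else Top)"
  by (simp add: fab_apply le_Bot_iff)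

lemma f00_in_R: "f00 \<in> R"
  using fab_in_R Bot_in Bot_neq_Top by blast

lemma finite_R: "finite R"
proof (rule finite_subset)
  show "R \<subseteq> L \<rightarrow>\<^sub>E L"
    using R_Res1 unfolding Res1_def by blast
  show "finite (L \<rightarrow>\<^sub>E L)"
    by (rule finite_PiE) (auto simp: finite_carrier)
qed

lemma semiring_R: "semiring R (fjoin L le) (fcomp L)"
  unfolding semiring_def
proof (intro conjI ballI)
  fix f h k assume fhk: "f \<in> R" "h \<in> R" "k \<in> R"
  show "fjoin L le (fjoin L le f h) k = fjoin L le f (fjoin L le h k)"
    by (rule extensionalityI[OF fjoin_extensional fjoin_extensional])
      (simp add: fjoin_apply fhk R_closed ljoin_closed ljoin_assoc)
  show "fcomp L (fcomp L f h) k = fcomp L f (fcomp L h k)"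
    by (rule extensionalityI[OF fcomp_extensional fcomp_extensional])
      (simp add: fcomp_apply fhk R_closed)
  show "fcomp L f (fjoin L le h k) = fjoin L le (fcomp L f h) (fcomp L f k)"
    by (rule extensionalityI[OF fcomp_extensional fjoin_extensional])
      (simp add: fcomp_apply fjoin_apply fhk R_closed Res1_ljoin R_Res1)
  show "fcomp L (fjoin L le f h) k = fjoin L le (fcomp L f k) (fcomp L h k)"
    by (rule extensionalityI[OF fcomp_extensional fjoin_extensional])
      (simp add: fcomp_apply fjoin_apply fhk R_closed)
next
  fix f h assume fh: "f \<in> R" "h \<in> R"
  then show "fjoin L le f h \<in> R" "fcomp L f h \<in> R"
    by (auto intro: R_fjoin R_fcomp)
  show "fjoin L le f h = fjoin L le h f"
    by (rule extensionalityI[OF fjoin_extensional fjoin_extensional])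
      (simp add: fjoin_apply fh R_closed ljoin_comm)
qed (rule R_nonempty)

lemma add_idempotent_R: "add_idempotent R (fjoin L le)"
  unfolding add_idempotent_def
proof
  fix f assume "f \<in> R"
  then show "fjoin L le f f = f"
    by (intro extensionalityI[OF fjoin_extensional R_extensional])
      (simp_all add: fjoin_apply R_closed ljoin_idem)
qed

lemma fjoin_f00: "f \<in> R \<Longrightarrow> fjoin L le f f00 = f00"
  by (rule extensionalityI[OF fjoin_extensional fab_extensional])
    (simp add: fjoin_apply f00_apply R_closed ljoin_Top Res1_Bot R_Res1 ljoin_idem Bot_in)

lemma greatest_f00: "greatest_elem R (fjoin L le) f00"
  unfolding greatest_elem_def using f00_in_R fjoin_f00 by blast

lemma right_absorbing_f00: "right_absorbing R (fcomp L) f00"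
  unfolding right_absorbing_def
proof
  fix f assume "f \<in> R"
  then show "fcomp L f f00 = f00"
    by (intro extensionalityI[OF fcomp_extensional fab_extensional])
      (simp add: fcomp_apply f00_apply Res1_Bot Res1_Top R_Res1)
qed

lemma not_left_absorbing_f00: "\<not> left_absorbing R (fcomp L) f00"
proof -
  obtain a where a: "a \<in> L" "a \<noteq> Bot" "a \<noteq> Top"
    using exists_middle by blast
  have "fcomp L f00 (fab L le a Bot) a = Bot"
    using a by (simp add: fcomp_apply fab_apply lat_refl f00_apply Bot_in)
  moreover have "f00 a = Top"
    using a by (simp add: f00_apply)
  ultimately have "fcomp L f00 (fab L le a Bot) \<noteq> f00"
    using Bot_neq_Top by metis
  then show ?thesis
    unfolding left_absorbing_def using fab_in_R a by blast
qed

lemma fjoin_fcomp_fab_eq: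
  assumes v: "v \<in> R" "v x = Bot" and k: "k \<in> R" "k w = x" and "x \<in> L" "w \<in> L"
  shows "fjoin L le (fcomp L v k) (fab L le w Bot) = fab L le w Bot"
proof (rule extensionalityI[OF fjoin_extensional fab_extensional])
  fix y assume y: "y \<in> L"
  have ky: "k y \<in> L"
    using R_closed[OF k(1) y] .
  show "fjoin L le (fcomp L v k) (fab L le w Bot) y = fab L le w Bot y"
  proof (cases "le y w")
    case True
    then have "le (k y) x"
      using Res1_mono[OF R_Res1[OF k(1)] y \<open>w \<in> L\<close>] k(2) by simp
    then have "le (v (k y)) Bot"
      using Res1_mono[OF R_Res1[OF v(1)] ky \<open>x \<in> L\<close>] v(2) by simp
    then have "v (k y) = Bot"
      using le_Bot_iff R_closed[OF v(1) ky] by simp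
    then show ?thesis
      using True y by (simp add: fjoin_apply fcomp_apply fab_apply ljoin_idem Bot_in)
  next
    case False
    then show ?thesis
      using y R_closed[OF v(1) ky] by (simp add: fjoin_apply fcomp_apply fab_apply ljoin_Top)
  qed
qed

text \<open>The map \<open>U = u \<circ> k \<or> f\<^sub>w\<^sub>,\<^sub>0\<close>, with \<open>k w = x\<close>, is congruent to \<open>v \<circ> k \<or> f\<^sub>w\<^sub>,\<^sub>0 = f\<^sub>w\<^sub>,\<^sub>0\<close>;
  being two-valued it is some \<open>f\<^sub>w\<^sub>'\<^sub>,\<^sub>0\<close>, and \<open>U w = Top\<close> forces \<open>w' < w\<close>.\<close>

lemma fab_congruent_smaller:
  assumes r: "semiring_congruence R (fjoin L le) (fcomp L) r"
    and uv: "(u, v) \<in> r" and u_two: "\<And>y. y \<in> L \<Longrightarrow> u y = Bot \<or> u y = Top"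
    and x: "x \<in> L" "u x = Top" "v x = Bot"
    and w: "w \<in> L" "w \<noteq> Bot" "w \<noteq> Top"
  obtains w' where "w' \<in> L" "w' \<noteq> Top" "le w' w" "w' \<noteq> w" "(fab L le w Bot, fab L le w' Bot) \<in> r"
proof -
  have uvR: "u \<in> R" "v \<in> R"
    using uv semiring_congruence_subset[OF r] by auto
  have fw: "fab L le w Bot \<in> R"
    using fab_in_R w by blast
  obtain k where k: "k \<in> R" "k w = x"
    using R_hits[OF w x(1)] by blast
  define U where "U = fjoin L le (fcomp L u k) (fab L le w Bot)"
  have "(U, fab L le w Bot) \<in> r"
    using semiring_congruence_add[OF r semiring_congruence_mul[OF r uv semiring_congruence_refl[OF r k(1)]]
        semiring_congruence_refl[OF r fw]] fjoin_fcomp_fab_eq[OF uvR(2) x(3) k x(1) w(1)]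
    unfolding U_def by simp
  moreover have UR: "U \<in> R"
    unfolding U_def by (intro R_fjoin R_fcomp uvR k fw)
  moreover have "U y = Bot \<or> U y = Top" if "y \<in> L" for y
    using u_two[OF R_closed[OF k(1) that]] that
    by (auto simp: U_def fjoin_apply fcomp_apply fab_apply ljoin_idem ljoin_Top ljoin_Top2 Bot_in Top_in)
  ultimately obtain w' where w': "w' \<in> L" "U = fab L le w' Bot" "(fab L le w' Bot, fab L le w Bot) \<in> r"
    using Res1_two_valued_eq_fab[OF R_Res1[OF UR]] by metis
  have "U w' = Bot"
    using w'(1,2) by (simp add: fab_apply lat_refl)
  then have "fab L le w Bot w' = Bot"
    using w'(1) R_closed[OF uvR(1) R_closed[OF k(1) w'(1)]] R_closed[OF fw w'(1)]
    by (simp add: U_def fjoin_apply fcomp_apply ljoin_eq_Bot_iff)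
  then have "le w' w"
    using w'(1) Bot_neq_Top by (auto simp: fab_apply split: if_splits)
  moreover have "U w = Top"
    using w(1) x(2) k(2) by (simp add: U_def fjoin_apply fcomp_apply fab_apply ljoin_Top2 Bot_in lat_refl)
  then have "w' \<noteq> w"
    using w'(2) w(1) Bot_neq_Top by (auto simp: fab_apply lat_refl)
  moreover have "w' \<noteq> Top"
    using w'(2) Res1_Top[OF R_Res1[OF UR]] Bot_neq_Top Top_in by (auto simp: fab_apply lat_refl)
  ultimately show thesis
    using that w'(1,3) semiring_congruence_sym[OF r] by blast
qed

lemma fab_congruent_f00:
  assumes r: "semiring_congruence R (fjoin L le) (fcomp L) r"
    and uv: "(u, v) \<in> r" and u_two: "\<And>y. y \<in> L \<Longrightarrow> u y = Bot \<or> u y = Top"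
    and x: "x \<in> L" "u x = Top" "v x = Bot"
    and w: "w \<in> L" "w \<noteq> Top"
  shows "(fab L le w Bot, f00) \<in> r"
  using w
proof (induction w rule: measure_induct_rule[where f = "\<lambda>w. card {y \<in> L. le y w}"])
  case (less w)
  show ?case
  proof (cases "w = Bot")
    case True
    then show ?thesis
      using semiring_congruence_refl[OF r f00_in_R] by simp
  next
    case False
    obtain w' where w': "w' \<in> L" "w' \<noteq> Top" "le w' w" "w' \<noteq> w"
      and congruent: "(fab L le w Bot, fab L le w' Bot) \<in> r"
      using fab_congruent_smaller[OF r uv u_two x less.prems(1) False less.prems(2)] by blast
    have "{y \<in> L. le y w'} \<subset> {y \<in> L. le y w}"
      using w' less.prems(1) lat_trans lat_refl lat_antisym by blast
    then have "card {y \<in> L. le y w'} < card {y \<in> L. le y w}"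
      by (rule psubset_card_mono[rotated]) (simp add: finite_carrier)
    then have "(fab L le w' Bot, f00) \<in> r"
      using less.IH w'(1,2) by blast
    then show ?thesis
      using congruent semiring_congruence_trans[OF r] by blast
  qed
qed

lemma congruent_f00:
  assumes r: "semiring_congruence R (fjoin L le) (fcomp L) r"
    and uv: "(u, v) \<in> r" and u_two: "\<And>y. y \<in> L \<Longrightarrow> u y = Bot \<or> u y = Top"
    and x: "x \<in> L" "u x = Top" "v x = Bot"
    and f: "f \<in> R"
  shows "(f, f00) \<in> r"
proof -
  obtain a where a: "a \<in> L" "a \<noteq> Top" "\<forall>y\<in>L. le (fab L le a Bot y) (f y)"
    using fab_below[OF f] by blast
  have "(fab L le a Bot, f00) \<in> r"
    using fab_congruent_f00[OF r uv u_two x a(1,2)] .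
  then have "(fjoin L le f (fab L le a Bot), fjoin L le f f00) \<in> r"
    using semiring_congruence_add[OF r semiring_congruence_refl[OF r f]] by blast
  moreover have "fjoin L le f (fab L le a Bot) = f"
  proof (rule extensionalityI[OF fjoin_extensional R_extensional[OF f]])
    fix y assume y: "y \<in> L"
    have "fab L le a Bot y \<in> L"
      using y by (simp add: fab_apply Bot_in Top_in)
    then show "fjoin L le f (fab L le a Bot) y = f y"
      using a(3) y R_closed[OF f y] by (simp add: fjoin_apply ljoin_absorb2)
  qed
  ultimately show ?thesis
    using fjoin_f00[OF f] by simp
qed

text \<open>Composing with \<open>f\<^sub>a\<^sub>,\<^sub>0\<close> for \<open>a = h x\<close> turns a pair with \<open>f x \<not>\<le> h x\<close>
  into a two-valued one separating \<open>x\<close>.\<close>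

lemma congruence_full_if_separating:
  assumes r: "semiring_congruence R (fjoin L le) (fcomp L) r"
    and fh: "(f, h) \<in> r" and x: "x \<in> L" "\<not> le (f x) (h x)"
  shows "r = R \<times> R"
proof -
  have f: "f \<in> R" and h: "h \<in> R"
    using fh semiring_congruence_subset[OF r] by auto
  define p where "p = h x"
  have p: "p \<in> L" "p \<noteq> Top"
    using x R_closed[OF f x(1)] R_closed[OF h x(1)] le_Top unfolding p_def by auto
  define u where "u = fcomp L (fab L le p Bot) f"
  define v where "v = fcomp L (fab L le p Bot) h"
  have "(u, v) \<in> r"
    unfolding u_def v_def using semiring_congruence_mul[OF r semiring_congruence_refl[OF r fab_in_R[OF p]] fh] .
  moreover have "u y = Bot \<or> u y = Top" if "y \<in> L" for y
    using that R_closed[OF f that] by (simp add: u_def fcomp_apply fab_apply)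
  moreover have "u x = Top" "v x = Bot"
    using x R_closed[OF h x(1)] R_closed[OF f x(1)] by (simp_all add: u_def v_def p_def fcomp_apply fab_apply lat_refl)
  ultimately have "(k, f00) \<in> r" if "k \<in> R" for k
    using congruent_f00[OF r _ _ x(1)] that by blast
  then show ?thesis
    using semiring_congruence_subset[OF r] semiring_congruence_sym[OF r] semiring_congruence_trans[OF r]
    by blast
qed

lemma simple_R: "simple_semiring R (fjoin L le) (fcomp L)"
  unfolding simple_semiring_def
proof (intro allI impI)
  fix r assume r: "semiring_congruence R (fjoin L le) (fcomp L) r"
  show "r = Id_on R \<or> r = R \<times> R"
  proof (cases "r \<subseteq> Id")
    case True
    then show ?thesis
      using semiring_congruence_subset[OF r] semiring_congruence_refl[OF r] by auto
  next
    case False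
    then obtain f h where fh: "(f, h) \<in> r" "f \<noteq> h"
      by auto
    have "f \<in> R" "h \<in> R"
      using fh semiring_congruence_subset[OF r] by auto
    then obtain x where x: "x \<in> L" "f x \<noteq> h x"
      using fh(2) extensionalityI[OF R_extensional R_extensional] by metis
    then have "\<not> le (f x) (h x) \<or> \<not> le (h x) (f x)"
      using lat_antisym R_closed \<open>f \<in> R\<close> \<open>h \<in> R\<close> by metis
    then show ?thesis
      using congruence_full_if_separating[OF r] fh(1) semiring_congruence_sym[OF r] x(1) by metis
  qed
qed

end

section \<open>Simple semirings whose greatest element is right absorbing\<close>

definition right_absorbing_elems :: "'a set \<Rightarrow> ('a \<Rightarrow> 'a \<Rightarrow> 'a) \<Rightarrow> 'a set" where
  "right_absorbing_elems S mul = {h \<in> S. right_absorbing S mul h}"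

definition absorbing_lattice :: "'a set \<Rightarrow> ('a \<Rightarrow> 'a \<Rightarrow> 'a) \<Rightarrow> 'a option set" where
  "absorbing_lattice S mul = insert None (Some ` right_absorbing_elems S mul)"

definition opt_le :: "('a \<Rightarrow> 'a \<Rightarrow> 'a) \<Rightarrow> 'a option \<Rightarrow> 'a option \<Rightarrow> bool" where
  "opt_le add x y =
     (case x of None \<Rightarrow> True | Some a \<Rightarrow> (case y of None \<Rightarrow> False | Some b \<Rightarrow> add a b = b))"

definition opt_join :: "('a \<Rightarrow> 'a \<Rightarrow> 'a) \<Rightarrow> 'a option \<Rightarrow> 'a option \<Rightarrow> 'a option" where
  "opt_join add x y =
     (case x of None \<Rightarrow> y | Some a \<Rightarrow> (case y of None \<Rightarrow> x | Some b \<Rightarrow> Some (add a b)))"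

definition opt_rmul :: "('a \<Rightarrow> 'a \<Rightarrow> 'a) \<Rightarrow> 'a \<Rightarrow> 'a option \<Rightarrow> 'a option" where
  "opt_rmul mul s = map_option (\<lambda>h. mul h s)"

text \<open>\<open>residual_map S add mul s\<close> is the upper adjoint of right multiplication by \<open>s\<close>.\<close>

definition residual_map ::
  "'a set \<Rightarrow> ('a \<Rightarrow> 'a \<Rightarrow> 'a) \<Rightarrow> ('a \<Rightarrow> 'a \<Rightarrow> 'a) \<Rightarrow> 'a \<Rightarrow> 'a option \<Rightarrow> 'a option" where
  "residual_map S add mul s = (\<lambda>y\<in>absorbing_lattice S mul.
     THE x. x \<in> absorbing_lattice S mul \<and> opt_le add (opt_rmul mul s x) y \<and>
       (\<forall>z\<in>absorbing_lattice S mul. opt_le add (opt_rmul mul s z) y \<longrightarrow> opt_le add z x))"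

lemma opt_le_simps [simp]:
  "opt_le add None y" "\<not> opt_le add (Some a) None" "opt_le add (Some a) (Some b) \<longleftrightarrow> add a b = b"
  unfolding opt_le_def by auto

lemma opt_join_simps [simp]:
  "opt_join add None y = y" "opt_join add x None = x" "opt_join add (Some a) (Some b) = Some (add a b)"
  unfolding opt_join_def by (auto split: option.split)

lemma opt_rmul_simps [simp]: "opt_rmul mul s None = None" "opt_rmul mul s (Some h) = Some (mul h s)"
  unfolding opt_rmul_def by auto

locale simple_ai_semiring =
  fixes S :: "'a set" and add mul :: "'a \<Rightarrow> 'a \<Rightarrow> 'a" and g :: 'a
  assumes finite_S: "finite S" and card_S: "card S > 2"
    and semiring: "semiring S add mul" and simple: "simple_semiring S add mul"
    and add_idem: "add_idempotent S add" and greatest: "greatest_elem S add g"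
    and right_absorbing_g: "right_absorbing S mul g" and not_left_absorbing_g: "\<not> left_absorbing S mul g"
begin

abbreviation "A \<equiv> right_absorbing_elems S mul"
abbreviation "X \<equiv> absorbing_lattice S mul"
abbreviation "ole \<equiv> opt_le add"

text \<open>The lattice of the theorem carries the order dual to \<open>ole\<close>, so that \<open>None\<close> is its top and
  \<open>Some g\<close> its bottom.\<close>

abbreviation "Le \<equiv> \<lambda>x y. opt_le add y x"
abbreviation "ojoin \<equiv> opt_join add"
abbreviation "\<rho> \<equiv> opt_rmul mul"
abbreviation "F \<equiv> residual_map S add mul"

lemma S_add_closed: "x \<in> S \<Longrightarrow> y \<in> S \<Longrightarrow> add x y \<in> S"
  and S_mul_closed: "x \<in> S \<Longrightarrow> y \<in> S \<Longrightarrow> mul x y \<in> S"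
  and S_add_assoc: "x \<in> S \<Longrightarrow> y \<in> S \<Longrightarrow> z \<in> S \<Longrightarrow> add (add x y) z = add x (add y z)"
  and S_add_comm: "x \<in> S \<Longrightarrow> y \<in> S \<Longrightarrow> add x y = add y x"
  and S_mul_assoc: "x \<in> S \<Longrightarrow> y \<in> S \<Longrightarrow> z \<in> S \<Longrightarrow> mul (mul x y) z = mul x (mul y z)"
  and S_distrib_left: "x \<in> S \<Longrightarrow> y \<in> S \<Longrightarrow> z \<in> S \<Longrightarrow> mul x (add y z) = add (mul x y) (mul x z)"
  and S_distrib_right: "x \<in> S \<Longrightarrow> y \<in> S \<Longrightarrow> z \<in> S \<Longrightarrow> mul (add x y) z = add (mul x z) (mul y z)"
  using semiring unfolding semiring_def by blast+

lemma S_add_idem: "x \<in> S \<Longrightarrow> add x x = x"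
  using add_idem unfolding add_idempotent_def by blast

lemma g_in_S: "g \<in> S" and add_g: "x \<in> S \<Longrightarrow> add x g = g" and mul_g: "x \<in> S \<Longrightarrow> mul x g = g"
  using greatest right_absorbing_g unfolding greatest_elem_def right_absorbing_def by blast+

lemma exists_mul_g_neq: "\<exists>t\<in>S. mul g t \<noteq> g"
  using not_left_absorbing_g unfolding left_absorbing_def by blast

lemma A_subset: "A \<subseteq> S"
  and A_absorbs: "h \<in> A \<Longrightarrow> s \<in> S \<Longrightarrow> mul s h = h"
  and g_in_A: "g \<in> A"
  unfolding right_absorbing_elems_def right_absorbing_def using g_in_S mul_g by auto

lemma A_in_S: "h \<in> A \<Longrightarrow> h \<in> S"
  using A_subset by blast

lemma A_mul_closed:
  assumes "h \<in> A" "s \<in> S"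
  shows "mul h s \<in> A"
proof -
  have "mul t (mul h s) = mul h s" if "t \<in> S" for t
    using S_mul_assoc[OF that _ \<open>s \<in> S\<close>, of h] A_absorbs[OF \<open>h \<in> A\<close> that] A_subset assms by auto
  then show ?thesis
    using assms A_subset S_mul_closed unfolding right_absorbing_elems_def right_absorbing_def by auto
qed

lemma A_add_closed:
  assumes "h \<in> A" "k \<in> A"
  shows "add h k \<in> A"
proof -
  have "mul t (add h k) = add h k" if "t \<in> S" for t
    using S_distrib_left[OF that, of h k] A_absorbs[OF _ that] A_subset assms by auto
  then show ?thesis
    using assms A_subset S_add_closed unfolding right_absorbing_elems_def right_absorbing_def by auto
qed

lemma None_in_X: "None \<in> X" and Some_in_X_iff: "Some h \<in> X \<longleftrightarrow> h \<in> A"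
  unfolding absorbing_lattice_def by auto

lemma X_cases: "x \<in> X \<Longrightarrow> x = None \<or> (\<exists>h\<in>A. x = Some h)"
  unfolding absorbing_lattice_def by blast

lemma finite_X: "finite X"
  unfolding absorbing_lattice_def using finite_subset[OF A_subset finite_S] by simp

lemma S_le_trans: "a \<in> S \<Longrightarrow> b \<in> S \<Longrightarrow> c \<in> S \<Longrightarrow> add a b = b \<Longrightarrow> add b c = c \<Longrightarrow> add a c = c"
  by (metis S_add_assoc)

lemma S_join_le_iff:
  assumes "a \<in> S" "b \<in> S" "c \<in> S"
  shows "add (add a b) c = c \<longleftrightarrow> add a c = c \<and> add b c = c"
proof
  assume abc: "add (add a b) c = c"
  have "add a (add a b) = add a b"
    using assms S_add_assoc[of a a b] S_add_idem[of a] by simp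
  moreover have "add b (add a b) = add a b"
    using assms S_add_comm[of b "add a b"] S_add_assoc[of a b b] S_add_idem[of b] S_add_closed by simp
  ultimately show "add a c = c \<and> add b c = c"
    using S_le_trans[OF _ S_add_closed[OF assms(1,2)] assms(3) _ abc] assms(1,2) by blast
qed (use assms S_add_assoc in simp)

lemma ole_refl: "x \<in> X \<Longrightarrow> ole x x"
  using A_subset S_add_idem by (cases x) (auto simp: Some_in_X_iff)

lemma ole_antisym: "x \<in> X \<Longrightarrow> y \<in> X \<Longrightarrow> ole x y \<Longrightarrow> ole y x \<Longrightarrow> x = y"
proof (cases x; cases y)
  fix a b assume "x \<in> X" "y \<in> X" "ole x y" "ole y x" "x = Some a" "y = Some b"
  then show "x = y"
    using S_add_comm[of a b] A_subset by (auto simp: Some_in_X_iff)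
qed simp_all

lemma ole_trans: "x \<in> X \<Longrightarrow> y \<in> X \<Longrightarrow> z \<in> X \<Longrightarrow> ole x y \<Longrightarrow> ole y z \<Longrightarrow> ole x z"
proof (cases x; cases y; cases z)
  fix a b c assume "x \<in> X" "y \<in> X" "z \<in> X" "ole x y" "ole y z" "x = Some a" "y = Some b" "z = Some c"
  then show "ole x z"
    using S_le_trans[of a b c] A_subset by (auto simp: Some_in_X_iff)
qed simp_all

lemma ole_Some_g: "x \<in> X \<Longrightarrow> ole x (Some g)"
  using A_subset add_g by (cases x) (auto simp: Some_in_X_iff)

lemma ole_None_iff: "ole x None \<longleftrightarrow> x = None"
  by (cases x) auto

lemma Some_g_in_X: "Some g \<in> X"
  using g_in_A Some_in_X_iff by blast

lemma ojoin_closed: "x \<in> X \<Longrightarrow> y \<in> X \<Longrightarrow> ojoin x y \<in> X"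
  using A_add_closed by (cases x; cases y) (auto simp: Some_in_X_iff)

lemma ojoin_le_iff: "x \<in> X \<Longrightarrow> y \<in> X \<Longrightarrow> z \<in> X \<Longrightarrow> ole (ojoin x y) z \<longleftrightarrow> ole x z \<and> ole y z"
  using S_join_le_iff A_subset[THEN subsetD] by (cases x; cases y; cases z) (auto simp: Some_in_X_iff)

lemma ole_ojoin1: "x \<in> X \<Longrightarrow> y \<in> X \<Longrightarrow> ole x (ojoin x y)"
  and ole_ojoin2: "x \<in> X \<Longrightarrow> y \<in> X \<Longrightarrow> ole y (ojoin x y)"
  using ojoin_le_iff ojoin_closed ole_refl by blast+

lemma ole_greatest_below:
  assumes D: "D \<subseteq> X" "None \<in> D" and closed: "\<And>u v. u \<in> D \<Longrightarrow> v \<in> D \<Longrightarrow> ojoin u v \<in> D"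
  shows "\<exists>m\<in>D. \<forall>z\<in>D. ole z m"
proof (rule finite_join_closed_has_greatest[where jn = ojoin])
  show "finite D"
    using finite_subset[OF D(1) finite_X] .
  show "D \<noteq> {}"
    using D(2) by blast
  show "ole x x" if "x \<in> D" for x
    using that D(1) ole_refl by blast
  show "ojoin x y \<in> D \<and> ole x (ojoin x y) \<and> ole y (ojoin x y)" if "x \<in> D" "y \<in> D" for x y
    using that D(1) closed ole_ojoin1 ole_ojoin2 by blast
  show "ole x z" if "x \<in> D" "y \<in> D" "z \<in> D" "ole x y" "ole y z" for x y z
    using that D(1) ole_trans by blast
qed

lemma finite_lattice_X: "finite_lattice_on X Le"
proof -
  have lub: "\<exists>z. is_lub X Le x y z" if xy: "x \<in> X" "y \<in> X" for x y
  proof -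
    define D where "D = {w \<in> X. ole w x \<and> ole w y}"
    have "\<exists>m\<in>D. \<forall>z\<in>D. ole z m"
    proof (rule ole_greatest_below)
      show "ojoin u v \<in> D" if "u \<in> D" "v \<in> D" for u v
        using that xy ojoin_closed ojoin_le_iff unfolding D_def by simp
    qed (simp_all add: D_def None_in_X)
    then show ?thesis
      unfolding is_lub_def D_def by blast
  qed
  have glb: "is_glb X Le x y (ojoin x y)" if "x \<in> X" "y \<in> X" for x y
    unfolding is_glb_def using that ojoin_closed ojoin_le_iff ole_ojoin1 ole_ojoin2 by blast
  have "\<forall>x\<in>X. \<forall>y\<in>X. Le x y \<and> Le y x \<longrightarrow> x = y"
    using ole_antisym by blast
  moreover have "\<forall>x\<in>X. \<forall>y\<in>X. \<forall>z\<in>X. Le x y \<and> Le y z \<longrightarrow> Le x z"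
    using ole_trans by blast
  moreover have "\<forall>x\<in>X. \<forall>y\<in>X. (\<exists>z. is_lub X Le x y z) \<and> (\<exists>z. is_glb X Le x y z)"
    using lub glb by blast
  ultimately show ?thesis
    unfolding finite_lattice_on_def using finite_X None_in_X ole_refl by blast
qed

sublocale X: fin_lattice X Le
  by unfold_locales (rule finite_lattice_X)

lemma ljoin_X_iff:
  "x \<in> X \<Longrightarrow> y \<in> X \<Longrightarrow> w \<in> X \<Longrightarrow> ole w (ljoin X Le x y) \<longleftrightarrow> ole w x \<and> ole w y"
  using X.ljoin_le_iff by blast

lemma eq_if_same_lower_bounds:
  "u \<in> X \<Longrightarrow> v \<in> X \<Longrightarrow> (\<And>z. z \<in> X \<Longrightarrow> ole z u \<longleftrightarrow> ole z v) \<Longrightarrow> u = v"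
  using ole_antisym ole_refl by blast

lemma lbot_X: "lbot X Le = Some g"
  using X.lbot_least ole_Some_g Some_g_in_X ole_antisym by blast

lemma ltop_X: "ltop X Le = None"
  using X.ltop_greatest None_in_X ole_antisym by auto

lemma rho_closed: "x \<in> X \<Longrightarrow> s \<in> S \<Longrightarrow> \<rho> s x \<in> X"
  using A_mul_closed by (cases x) (auto simp: Some_in_X_iff)

lemma rho_mono: "x \<in> X \<Longrightarrow> y \<in> X \<Longrightarrow> s \<in> S \<Longrightarrow> ole x y \<Longrightarrow> ole (\<rho> s x) (\<rho> s y)"
  using A_in_S by (cases x; cases y) (auto simp: Some_in_X_iff S_distrib_right[symmetric])

lemma rho_ojoin: "x \<in> X \<Longrightarrow> y \<in> X \<Longrightarrow> s \<in> S \<Longrightarrow> \<rho> s (ojoin x y) = ojoin (\<rho> s x) (\<rho> s y)"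
  using S_distrib_right A_in_S by (cases x; cases y) (auto simp: Some_in_X_iff)

lemma rho_add: "x \<in> X \<Longrightarrow> s \<in> S \<Longrightarrow> t \<in> S \<Longrightarrow> \<rho> (add s t) x = ojoin (\<rho> s x) (\<rho> t x)"
  using S_distrib_left A_in_S by (cases x) (auto simp: Some_in_X_iff)

lemma rho_mul: "x \<in> X \<Longrightarrow> s \<in> S \<Longrightarrow> t \<in> S \<Longrightarrow> \<rho> (mul s t) x = \<rho> t (\<rho> s x)"
  using S_mul_assoc A_in_S by (cases x) (auto simp: Some_in_X_iff)

lemma residual_map_greatest:
  assumes s: "s \<in> S" and y: "y \<in> X"
  shows "F s y \<in> X \<and> ole (\<rho> s (F s y)) y \<and> (\<forall>z\<in>X. ole (\<rho> s z) y \<longrightarrow> ole z (F s y))"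
proof -
  define D where "D = {w \<in> X. ole (\<rho> s w) y}"
  have "\<exists>m\<in>D. \<forall>z\<in>D. ole z m"
  proof (rule ole_greatest_below)
    show "ojoin u v \<in> D" if "u \<in> D" "v \<in> D" for u v
      using that s y ojoin_closed rho_ojoin rho_closed ojoin_le_iff unfolding D_def by simp
  qed (simp_all add: D_def None_in_X)
  then have "\<exists>!x. x \<in> X \<and> ole (\<rho> s x) y \<and> (\<forall>z\<in>X. ole (\<rho> s z) y \<longrightarrow> ole z x)"
    unfolding D_def using ole_antisym by blast
  from theI'[OF this] show ?thesis
    unfolding residual_map_def using y by simp
qed

lemma residual_map_closed: "s \<in> S \<Longrightarrow> y \<in> X \<Longrightarrow> F s y \<in> X"
  using residual_map_greatest by blast

lemma residual_map_extensional: "F s \<in> extensional X"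
  unfolding residual_map_def by simp

lemma residual_map_galois: "s \<in> S \<Longrightarrow> x \<in> X \<Longrightarrow> y \<in> X \<Longrightarrow> ole x (F s y) \<longleftrightarrow> ole (\<rho> s x) y"
  by (meson residual_map_greatest residual_map_closed rho_mono rho_closed ole_trans)

lemma residual_map_ljoin:
  "s \<in> S \<Longrightarrow> y \<in> X \<Longrightarrow> y' \<in> X \<Longrightarrow> F s (ljoin X Le y y') = ljoin X Le (F s y) (F s y')"
  by (rule eq_if_same_lower_bounds)
    (simp_all add: residual_map_closed X.ljoin_closed residual_map_galois ljoin_X_iff rho_closed)

lemma residual_map_Some_g: "s \<in> S \<Longrightarrow> F s (Some g) = Some g"
  by (rule eq_if_same_lower_bounds)
    (simp_all add: residual_map_closed Some_g_in_X residual_map_galois rho_closed ole_Some_g)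

lemma residual_map_None: "s \<in> S \<Longrightarrow> F s None = None"
proof (rule eq_if_same_lower_bounds)
  fix z assume "s \<in> S" "z \<in> X"
  then show "ole z (F s None) \<longleftrightarrow> ole z None"
    by (cases z) (simp_all add: residual_map_galois None_in_X)
qed (simp_all add: residual_map_closed None_in_X)

lemma residual_map_add:
  assumes "s \<in> S" "t \<in> S" "y \<in> X"
  shows "F (add s t) y = ljoin X Le (F s y) (F t y)"
proof (rule eq_if_same_lower_bounds)
  fix z assume z: "z \<in> X"
  have "ole z (F (add s t) y) \<longleftrightarrow> ole (ojoin (\<rho> s z) (\<rho> t z)) y"
    using residual_map_galois[OF S_add_closed[OF assms(1,2)] z assms(3)] rho_add z assms by simp
  also have "\<dots> \<longleftrightarrow> ole z (ljoin X Le (F s y) (F t y))"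
    using assms z ojoin_le_iff rho_closed ljoin_X_iff residual_map_closed residual_map_galois by simp
  finally show "ole z (F (add s t) y) \<longleftrightarrow> ole z (ljoin X Le (F s y) (F t y))" .
qed (simp_all add: assms residual_map_closed X.ljoin_closed S_add_closed)

lemma residual_map_mul: "s \<in> S \<Longrightarrow> t \<in> S \<Longrightarrow> y \<in> X \<Longrightarrow> F (mul s t) y = F s (F t y)"
  by (rule eq_if_same_lower_bounds)
    (simp_all add: residual_map_closed S_mul_closed residual_map_galois rho_mul rho_closed)

lemma residual_map_absorbing:
  assumes h: "h \<in> A" and y: "y \<in> X"
  shows "F h y = (if ole (Some h) y then Some g else None)"
proof (rule eq_if_same_lower_bounds)
  fix z assume z: "z \<in> X"
  have "\<rho> h z = (if z = None then None else Some h)"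
    using z A_absorbs[OF h] A_in_S by (cases z) (auto simp: Some_in_X_iff)
  then show "ole z (F h y) \<longleftrightarrow> ole z (if ole (Some h) y then Some g else None)"
    using residual_map_galois[OF A_in_S[OF h] z y] ole_Some_g[OF z] ole_None_iff[of z]
    by (cases "z = None") auto
qed (use h y in \<open>auto simp: residual_map_closed A_in_S Some_g_in_X None_in_X\<close>)

lemma right_translation_faithful:
  assumes s: "s \<in> S" and t: "t \<in> S" and eq: "\<forall>h\<in>A. mul h s = mul h t"
  shows "s = t"
proof -
  define \<kappa> where "\<kappa> x = (\<lambda>h\<in>A. mul h x)" for x
  have \<kappa>_eq_iff: "\<kappa> x = \<kappa> y \<longleftrightarrow> (\<forall>h\<in>A. mul h x = mul h y)" for x y
    unfolding \<kappa>_def by (auto simp: fun_eq_iff restrict_def)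
  obtain t0 where t0: "t0 \<in> S" "mul g t0 \<noteq> g"
    using exists_mul_g_neq by blast
  have "inj_on \<kappa> S"
  proof (rule simple_semiring_inj_on[OF semiring simple _ g_in_S t0(1)])
    fix x y u v assume xyuv: "x \<in> S" "y \<in> S" "u \<in> S" "v \<in> S" "\<kappa> x = \<kappa> y" "\<kappa> u = \<kappa> v"
    have "mul h (mul x u) = mul h (mul y v)" if h: "h \<in> A" for h
    proof -
      have "mul h (mul x u) = mul (mul h y) u"
        using S_mul_assoc[OF A_in_S[OF h] xyuv(1,3)] xyuv(5) h unfolding \<kappa>_eq_iff by simp
      also have "\<dots> = mul (mul h y) v"
        using xyuv(6) A_mul_closed[OF h xyuv(2)] unfolding \<kappa>_eq_iff by blast
      finally show ?thesis
        using S_mul_assoc[OF A_in_S[OF h] xyuv(2,4)] by simp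
    qed
    moreover have "mul h (add x u) = mul h (add y v)" if h: "h \<in> A" for h
      using xyuv h A_in_S S_distrib_left unfolding \<kappa>_eq_iff by simp
    ultimately show "\<kappa> (add x u) = \<kappa> (add y v) \<and> \<kappa> (mul x u) = \<kappa> (mul y v)"
      unfolding \<kappa>_eq_iff by blast
  next
    show "\<kappa> g \<noteq> \<kappa> t0"
      using t0 g_in_A mul_g[OF g_in_S] unfolding \<kappa>_eq_iff by metis
  qed
  then show ?thesis
    using s t eq unfolding \<kappa>_eq_iff inj_on_def by blast
qed

lemma residual_map_inj: "inj_on F S"
proof (rule inj_onI)
  fix s t assume s: "s \<in> S" and t: "t \<in> S" and st: "F s = F t"
  show "s = t"
  proof (rule right_translation_faithful[OF s t], rule ballI)
    fix h assume "h \<in> A"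
    then have hX: "Some h \<in> X"
      using Some_in_X_iff by blast
    have "ole (\<rho> s (Some h)) y \<longleftrightarrow> ole (\<rho> t (Some h)) y" if "y \<in> X" for y
      using residual_map_galois[OF s hX that] residual_map_galois[OF t hX that] st by simp
    then have "\<rho> s (Some h) = \<rho> t (Some h)"
      using rho_closed[OF hX s] rho_closed[OF hX t] ole_refl ole_antisym by blast
    then show "mul h s = mul h t"
      by simp
  qed
qed

lemma absorbing_bound_closed:
  assumes c: "c \<in> A" and s: "s \<in> S" and t: "t \<in> S" and h: "h \<in> A"
    and bound: "\<And>h. h \<in> A \<Longrightarrow> add c (mul h s) = mul h s"
  shows "add c (mul h (add s t)) = mul h (add s t)"
    and "add (mul c t) (mul h (mul s t)) = mul h (mul s t)"
    and "add c (mul h (mul t s)) = mul h (mul t s)"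
proof -
  have S: "h \<in> S" "c \<in> S" "mul h s \<in> S" "mul h t \<in> S"
    using h c s t A_in_S S_mul_closed by auto
  have "add c (mul h (add s t)) = add (add c (mul h s)) (mul h t)"
    using S_distrib_left[OF S(1) s t] S_add_assoc[OF S(2-4)] by simp
  then show "add c (mul h (add s t)) = mul h (add s t)"
    using bound[OF h] S_distrib_left[OF S(1) s t] by simp
  have "add (mul c t) (mul (mul h s) t) = mul (add c (mul h s)) t"
    using S_distrib_right[OF S(2,3) t] by simp
  then show "add (mul c t) (mul h (mul s t)) = mul h (mul s t)"
    using bound[OF h] S_mul_assoc[OF S(1) s t] by simp
  show "add c (mul h (mul t s)) = mul h (mul t s)"
    using bound[OF A_mul_closed[OF h t]] S_mul_assoc[OF S(1) t s] by simp
qed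

text \<open>The elements lying above some absorbing element after every right multiplication form an
  ideal containing the two distinct absorbing elements \<open>g\<close> and \<open>g t\<close>; by simplicity it is all
  of \<open>S\<close>.\<close>

lemma absorbing_lower_bound:
  assumes "s \<in> S"
  shows "\<exists>c\<in>A. \<forall>h\<in>A. add c (mul h s) = mul h s"
proof -
  define I where "I = {s \<in> S. \<exists>c\<in>A. \<forall>h\<in>A. add c (mul h s) = mul h s}"
  have "I \<subseteq> S"
    unfolding I_def by blast
  have A_I: "h \<in> I" if "h \<in> A" for h
    using that A_absorbs A_in_S S_add_idem unfolding I_def by fastforce
  have "add s t \<in> I \<and> mul s t \<in> I \<and> mul t s \<in> I" if s: "s \<in> I" and t: "t \<in> S" for s t
  proof -
    obtain c where c: "s \<in> S" "c \<in> A" "\<And>h. h \<in> A \<Longrightarrow> add c (mul h s) = mul h s"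
      using s unfolding I_def by blast
    note bound = absorbing_bound_closed[OF c(2,1) t _ c(3)]
    have "add s t \<in> I"
      unfolding I_def using bound(1) c(1,2) t S_add_closed by blast
    moreover have "mul s t \<in> I"
      unfolding I_def using bound(2) A_mul_closed[OF c(2) t] c(1) t S_mul_closed by blast
    moreover have "mul t s \<in> I"
      unfolding I_def using bound(3) c(1,2) t S_mul_closed by blast
    ultimately show ?thesis
      by blast
  qed
  moreover obtain t0 where "t0 \<in> S" "mul g t0 \<noteq> g"
    using exists_mul_g_neq by blast
  ultimately have "I = S"
    using simple_semiring_ideal_eq_carrier[OF semiring simple \<open>I \<subseteq> S\<close>]
      A_I[OF g_in_A] A_I[OF A_mul_closed[OF g_in_A]] by metis
  then show ?thesis
    using assms unfolding I_def by blast
qed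

abbreviation "orbit p \<equiv> (\<lambda>s. F s (Some p)) ` S"

lemma orbit_subset: "p \<in> A \<Longrightarrow> orbit p \<subseteq> X"
  using residual_map_closed Some_in_X_iff by blast

lemma orbit_action_closed:
  assumes "p \<in> A" "u \<in> S" "z \<in> orbit p"
  shows "F u z \<in> orbit p"
proof -
  obtain w where "w \<in> S" "z = F w (Some p)"
    using assms(3) by blast
  then have "F u z = F (mul u w) (Some p)"
    using residual_map_mul assms(1,2) Some_in_X_iff by simp
  then show ?thesis
    using S_mul_closed \<open>w \<in> S\<close> assms(2) by blast
qed

lemma orbit_ljoin_closed:
  assumes "p \<in> A" "z \<in> orbit p" "z' \<in> orbit p"
  shows "ljoin X Le z z' \<in> orbit p"
proof -
  obtain s t where "s \<in> S" "t \<in> S" "z = F s (Some p)" "z' = F t (Some p)"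
    using assms(2,3) by blast
  then show ?thesis
    using residual_map_add[of s t "Some p"] assms(1) Some_in_X_iff S_add_closed by (metis image_eqI)
qed

lemma residual_map_g_Some:
  assumes "p \<in> A" "p \<noteq> g"
  shows "F g (Some p) = None"
proof -
  have "add g p \<noteq> p"
    using assms add_g[OF A_in_S] S_add_comm[OF A_in_S g_in_S] by metis
  then show ?thesis
    using residual_map_absorbing[OF g_in_A] assms(1) Some_in_X_iff by simp
qed

lemma residual_map_self: "p \<in> A \<Longrightarrow> F p (Some p) = Some g"
  using residual_map_absorbing Some_in_X_iff S_add_idem A_in_S by simp

text \<open>If the orbit of \<open>Some p\<close> only met the two fixed points \<open>None\<close> and \<open>Some g\<close>, the
  map \<open>s \<mapsto> F s (Some p)\<close> would be a homomorphism onto a two-element semiring, which is injective by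
  simplicity: impossible as \<open>card S > 2\<close>.\<close>

lemma orbit_proper_point:
  assumes p: "p \<in> A" "p \<noteq> g"
  obtains x0 where "Some x0 \<in> orbit p" "x0 \<noteq> g"
proof -
  have "\<not> orbit p \<subseteq> {None, Some g}"
  proof
    assume two: "orbit p \<subseteq> {None, Some g}"
    have pX: "Some p \<in> X"
      using p Some_in_X_iff by blast
    have fixed: "F w (F u (Some p)) = F u (Some p)" if "w \<in> S" "u \<in> S" for w u
    proof -
      have "F u (Some p) = None \<or> F u (Some p) = Some g"
        using two that(2) by blast
      then show ?thesis
        using residual_map_None[OF that(1)] residual_map_Some_g[OF that(1)] by auto
    qed
    have "inj_on (\<lambda>s. F s (Some p)) S"
    proof (rule simple_semiring_inj_on[OF semiring simple _ g_in_S A_in_S[OF p(1)]])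
      fix x y u v assume xyuv: "x \<in> S" "y \<in> S" "u \<in> S" "v \<in> S"
        "F x (Some p) = F y (Some p)" "F u (Some p) = F v (Some p)"
      then show "F (add x u) (Some p) = F (add y v) (Some p) \<and>
          F (mul x u) (Some p) = F (mul y v) (Some p)"
        using residual_map_add residual_map_mul fixed pX by simp
    qed (use residual_map_g_Some residual_map_self p in simp)
    then have "card S \<le> card {None, Some g}"
      using two by (intro card_inj_on_le) auto
    also have "\<dots> \<le> 2"
      by (simp add: card_insert_le_m1)
    finally show False
      using card_S by simp
  qed
  then obtain z where "z \<in> orbit p" "z \<noteq> None" "z \<noteq> Some g"
    by blast
  then show thesis
    using that by (cases z) auto
qed

lemma orbit_faithful:
  assumes p: "p \<in> A" "p \<noteq> g"
  shows "inj_on (\<lambda>s. restrict (F s) (orbit p)) S"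
proof -
  have restrict_eq_iff: "restrict (F x) (orbit p) = restrict (F y) (orbit p) \<longleftrightarrow>
      (\<forall>z\<in>orbit p. F x z = F y z)" for x y
    by (auto simp: fun_eq_iff restrict_def)
  obtain x0 where x0: "Some x0 \<in> orbit p" "x0 \<noteq> g"
    using orbit_proper_point[OF p] by blast
  have x0A: "x0 \<in> A"
    using x0(1) orbit_subset[OF p(1)] Some_in_X_iff by blast
  show ?thesis
  proof (rule simple_semiring_inj_on[OF semiring simple _ g_in_S A_in_S[OF x0A]])
    fix x y u v assume xyuv: "x \<in> S" "y \<in> S" "u \<in> S" "v \<in> S"
      "restrict (F x) (orbit p) = restrict (F y) (orbit p)"
      "restrict (F u) (orbit p) = restrict (F v) (orbit p)"
    have xy: "F x z = F y z" and uv: "F u z = F v z" if "z \<in> orbit p" for z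
      using xyuv(5,6) that unfolding restrict_eq_iff by blast+
    have "F (mul x u) z = F (mul y v) z" if z: "z \<in> orbit p" for z
    proof -
      have zX: "z \<in> X" and uz: "F u z \<in> orbit p"
        using z orbit_subset[OF p(1)] orbit_action_closed[OF p(1) xyuv(3) z] by auto
      have "F (mul x u) z = F y (F u z)"
        using residual_map_mul[OF xyuv(1,3) zX] xy[OF uz] by simp
      also have "\<dots> = F (mul y v) z"
        using residual_map_mul[OF xyuv(2,4) zX] uv[OF z] by simp
      finally show ?thesis .
    qed
    moreover have "F (add x u) z = F (add y v) z" if z: "z \<in> orbit p" for z
      using residual_map_add[OF xyuv(1,3)] residual_map_add[OF xyuv(2,4)] xy[OF z] uv[OF z]
        z orbit_subset[OF p(1)] by auto
    ultimately show "restrict (F (add x u)) (orbit p) = restrict (F (add y v)) (orbit p) \<and>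
        restrict (F (mul x u)) (orbit p) = restrict (F (mul y v)) (orbit p)"
      unfolding restrict_eq_iff by blast
  next
    show "restrict (F g) (orbit p) \<noteq> restrict (F x0) (orbit p)"
      using x0 residual_map_g_Some[OF x0A x0(2)] residual_map_self[OF x0A]
      unfolding restrict_eq_iff by force
  qed
qed

lemma orbit_least_above:
  assumes p: "p \<in> A" and q: "q \<in> A"
  shows "\<exists>m\<in>orbit p. ole (Some q) m \<and> (\<forall>z\<in>orbit p. ole (Some q) z \<longrightarrow> ole m z)"
proof -
  define D where "D = {z \<in> orbit p. ole (Some q) z}"
  have qX: "Some q \<in> X"
    using q Some_in_X_iff by blast
  have DX: "D \<subseteq> X"
    unfolding D_def using orbit_subset[OF p] by blast
  have "\<exists>m\<in>D. \<forall>z\<in>D. ole m z"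
  proof (rule finite_join_closed_has_greatest[where jn = "ljoin X Le" and le = "\<lambda>x y. ole y x"])
    show "finite D"
      using finite_subset[OF DX finite_X] .
    have "F p (Some p) \<in> orbit p"
      using A_in_S[OF p] by blast
    then have "Some g \<in> D"
      unfolding D_def using residual_map_self[OF p] ole_Some_g[OF qX] by simp
    then show "D \<noteq> {}"
      by blast
    show "ljoin X Le x y \<in> D \<and> ole (ljoin X Le x y) x \<and> ole (ljoin X Le x y) y"
      if xy: "x \<in> D" "y \<in> D" for x y
    proof -
      have "x \<in> X" "y \<in> X" "ole (Some q) x" "ole (Some q) y" "x \<in> orbit p" "y \<in> orbit p"
        using xy DX unfolding D_def by auto
      then show ?thesis
        unfolding D_def using orbit_ljoin_closed[OF p] ljoin_X_iff qX X.ljoin_upper1 X.ljoin_upper2 by simp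
    qed
    show "ole x x" if "x \<in> D" for x
      using that DX ole_refl by blast
    show "ole z x" if "x \<in> D" "y \<in> D" "z \<in> D" "ole y x" "ole z y" for x y z
      using that DX ole_trans by blast
  qed
  then show ?thesis
    unfolding D_def by auto
qed

text \<open>For \<open>b = Some q\<close>, take the least orbit element \<open>Some m\<close> above \<open>Some q\<close>: the residual maps of the
  absorbing elements \<open>q\<close> and \<open>m\<close> agree on the orbit, so \<open>q = m\<close> by faithfulness.\<close>

lemma orbit_eq_X:
  assumes p: "p \<in> A" "p \<noteq> g" and b: "b \<in> X"
  shows "\<exists>s\<in>S. F s (Some p) = b"
proof (cases b)
  case None
  then show ?thesis
    using residual_map_g_Some[OF p] g_in_S by blast
next
  case (Some q)
  then have q: "q \<in> A" and qX: "Some q \<in> X"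
    using b Some_in_X_iff by auto
  obtain m where m: "m \<in> orbit p" "ole (Some q) m" "\<And>z. z \<in> orbit p \<Longrightarrow> ole (Some q) z \<Longrightarrow> ole m z"
    using orbit_least_above[OF p(1) q] by blast
  have mX: "m \<in> X"
    using m(1) orbit_subset[OF p(1)] by blast
  then obtain m' where m': "m = Some m'" "m' \<in> A"
    using m(2) X_cases by fastforce
  have same_up: "ole (Some q) z \<longleftrightarrow> ole (Some m') z" if z: "z \<in> orbit p" for z
  proof
    assume "ole (Some q) z"
    then show "ole (Some m') z"
      using m(3)[OF z] m'(1) by simp
  next
    assume "ole (Some m') z"
    then show "ole (Some q) z"
      using ole_trans[OF qX mX _ m(2)] z orbit_subset[OF p(1)] m'(1) by blast
  qed
  have "F q z = F m' z" if "z \<in> orbit p" for z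
    using that same_up[OF that] residual_map_absorbing[OF q] residual_map_absorbing[OF m'(2)]
      orbit_subset[OF p(1)] by auto
  then have "restrict (F q) (orbit p) = restrict (F m') (orbit p)"
    by (rule restrict_ext)
  then have "q = m'"
    using inj_onD[OF orbit_faithful[OF p]] A_in_S q m'(2) by blast
  then show ?thesis
    using m(1) m'(1) Some by blast
qed

lemma card_X: "card X > 2"
proof -
  obtain t where t: "t \<in> S" "mul g t \<noteq> g"
    using exists_mul_g_neq by blast
  have "{None, Some g, Some (mul g t)} \<subseteq> X"
    using None_in_X Some_g_in_X A_mul_closed[OF g_in_A t(1)] Some_in_X_iff by auto
  then have "card {None, Some g, Some (mul g t)} \<le> card X"
    by (rule card_mono[OF finite_X])
  moreover have "card {None, Some g, Some (mul g t)} = 3"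
    using t by auto
  ultimately show ?thesis
    by simp
qed

lemma residual_map_Res1: "s \<in> S \<Longrightarrow> F s \<in> Res1 X Le"
  unfolding Res1_def
  using residual_map_extensional residual_map_closed residual_map_ljoin residual_map_Some_g
    residual_map_None lbot_X ltop_X
  by (auto simp: PiE_iff)

lemma fjoin_residual_map: "s \<in> S \<Longrightarrow> t \<in> S \<Longrightarrow> fjoin X Le (F s) (F t) = F (add s t)"
  by (rule extensionalityI[OF fjoin_extensional residual_map_extensional])
    (simp add: fjoin_apply residual_map_add)

lemma fcomp_residual_map: "s \<in> S \<Longrightarrow> t \<in> S \<Longrightarrow> fcomp X (F s) (F t) = F (mul s t)"
  by (rule extensionalityI[OF fcomp_extensional residual_map_extensional])
    (simp add: fcomp_apply residual_map_closed residual_map_mul)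

lemma fab_eq_residual_map: "h \<in> A \<Longrightarrow> fab X Le (Some h) (lbot X Le) = F h"
  by (rule extensionalityI[OF fab_extensional residual_map_extensional])
    (simp add: X.fab_apply lbot_X ltop_X residual_map_absorbing)

lemma fab_below_residual_map:
  assumes s: "s \<in> S"
  shows "\<exists>a\<in>X - {ltop X Le}. \<forall>x\<in>X. Le (fab X Le a (lbot X Le) x) (F s x)"
proof -
  obtain c where c: "c \<in> A" "\<And>h. h \<in> A \<Longrightarrow> add c (mul h s) = mul h s"
    using absorbing_lower_bound[OF s] by blast
  have cX: "Some c \<in> X"
    using c(1) Some_in_X_iff by blast
  have "ole (F s x) (fab X Le (Some c) (lbot X Le) x)" if x: "x \<in> X" for x
  proof (cases "ole (Some c) x")
    case True
    then show ?thesis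
      using x s residual_map_closed ole_Some_g by (simp add: X.fab_apply lbot_X)
  next
    case False
    have "F s x = None"
    proof (rule ccontr)
      assume "F s x \<noteq> None"
      then obtain h where h: "F s x = Some h" "h \<in> A"
        using X_cases[OF residual_map_closed[OF s x]] by auto
      have hX: "Some h \<in> X" and hsX: "Some (mul h s) \<in> X"
        using h(2) A_mul_closed[OF h(2) s] Some_in_X_iff by auto
      have "ole (Some h) (F s x)"
        using h(1) ole_refl[OF hX] by simp
      then have "ole (Some (mul h s)) x"
        using residual_map_galois[OF s hX x] by simp
      moreover have "ole (Some c) (Some (mul h s))"
        using c(2)[OF h(2)] by simp
      ultimately have "ole (Some c) x"
        using ole_trans[OF cX hsX x] by blast
      then show False
        using False by simp
    qed
    then show ?thesis
      using x False by (simp add: X.fab_apply ltop_X)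
  qed
  moreover have "Some c \<in> X - {ltop X Le}"
    using cX ltop_X by simp
  ultimately show ?thesis
    by blast
qed

lemma good_pair_X: "good_pair X Le (F ` S)"
  unfolding good_pair_def subsemiring_Res1_def
proof (intro conjI ballI)
  show "F ` S \<noteq> {}"
    using g_in_S by blast
  show "F ` S \<subseteq> Res1 X Le"
    using residual_map_Res1 by blast
next
  fix f h assume "f \<in> F ` S" "h \<in> F ` S"
  then show "fjoin X Le f h \<in> F ` S" "fcomp X f h \<in> F ` S"
    using fjoin_residual_map fcomp_residual_map S_add_closed S_mul_closed by auto
next
  fix a assume "a \<in> X - {ltop X Le}"
  then obtain h where "a = Some h" "h \<in> A"
    using ltop_X X_cases by auto
  then show "fab X Le a (lbot X Le) \<in> F ` S"
    using fab_eq_residual_map A_in_S by auto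
next
  fix f assume "f \<in> F ` S"
  then show "\<exists>a\<in>X - {ltop X Le}. \<forall>x\<in>X. Le (fab X Le a (lbot X Le) x) (f x)"
    using fab_below_residual_map by blast
next
  fix a b assume a: "a \<in> X - {lbot X Le, ltop X Le}" and b: "b \<in> X"
  then obtain p where "a = Some p" "p \<in> A" "p \<noteq> g"
    using lbot_X ltop_X X_cases by auto
  then show "\<exists>f\<in>F ` S. f a = b"
    using orbit_eq_X[OF _ _ b] by blast
qed (use finite_lattice_X card_X in auto)

lemma semiring_iso_X: "semiring_iso F S add mul (F ` S) (fjoin X Le) (fcomp X)"
  unfolding semiring_iso_def
  using inj_on_imp_bij_betw[OF residual_map_inj] fjoin_residual_map fcomp_residual_map by simp

end

section \<open>Relabelling the lattice\<close>

locale lattice_relabelling = fin_lattice L le for L :: "'b set" and le +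
  fixes j :: "'b \<Rightarrow> 'c"
  assumes inj_j: "inj_on j L"
begin

abbreviation "L' \<equiv> j ` L"
abbreviation "le' \<equiv> \<lambda>x y. le (inv_into L j x) (inv_into L j y)"

definition relabel :: "('b \<Rightarrow> 'b) \<Rightarrow> 'c \<Rightarrow> 'c" where
  "relabel f = (\<lambda>x\<in>L'. j (f (inv_into L j x)))"

lemma inv_into_j [simp]: "x \<in> L \<Longrightarrow> inv_into L j (j x) = x"
  using inj_j by (simp add: inv_into_f_f)

lemma j_inv_into [simp]: "y \<in> L' \<Longrightarrow> j (inv_into L j y) = y"
  by (simp add: f_inv_into_f)

lemma inv_into_in [simp]: "y \<in> L' \<Longrightarrow> inv_into L j y \<in> L"
  by (simp add: inv_into_into)

lemma is_lub_relabel: "x \<in> L \<Longrightarrow> y \<in> L \<Longrightarrow> is_lub L' le' (j x) (j y) (j (ljoin L le x y))"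
  unfolding is_lub_def using ljoin_closed ljoin_upper1 ljoin_upper2 ljoin_least by simp

lemma finite_lattice_relabel: "finite_lattice_on L' le'"
  unfolding finite_lattice_on_def
proof (intro conjI ballI impI)
  show "finite L'" "L' \<noteq> {}"
    using finite_carrier carrier_nonempty by simp_all
  fix x y assume xy: "x \<in> L'" "y \<in> L'"
  show "le' x x"
    using lat_refl[OF inv_into_in[OF xy(1)]] .
  show "\<exists>z. is_lub L' le' x y z"
    using is_lub_relabel[OF inv_into_in[OF xy(1)] inv_into_in[OF xy(2)]] xy by auto
  obtain z where "is_glb L le (inv_into L j x) (inv_into L j y) z"
    using glb_exists[OF inv_into_in[OF xy(1)] inv_into_in[OF xy(2)]] by blast
  then have "is_glb L' le' x y (j z)"
    using xy unfolding is_glb_def by simp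
  then show "\<exists>z. is_glb L' le' x y z"
    by blast
  show "x = y" if "le' x y \<and> le' y x"
    using lat_antisym[OF inv_into_in[OF xy(1)] inv_into_in[OF xy(2)]] that xy j_inv_into by metis
  fix z assume z: "z \<in> L'"
  show "le' x z" if "le' x y \<and> le' y z"
    using lat_trans[OF inv_into_in[OF xy(1)] inv_into_in[OF xy(2)] inv_into_in[OF z]] that by blast
qed

sublocale L': fin_lattice L' le'
  by unfold_locales (rule finite_lattice_relabel)

lemma ljoin_relabel: "x \<in> L \<Longrightarrow> y \<in> L \<Longrightarrow> ljoin L' le' (j x) (j y) = j (ljoin L le x y)"
  by (rule L'.ljoin_eq) (simp_all add: is_lub_relabel)

lemma lbot_relabel: "lbot L' le' = j Bot"
  using L'.lbot_least lbot_least L'.lat_antisym by auto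

lemma ltop_relabel: "ltop L' le' = j Top"
  using L'.ltop_greatest ltop_greatest L'.lat_antisym by auto

lemma relabel_apply: "y \<in> L' \<Longrightarrow> relabel f y = j (f (inv_into L j y))"
  unfolding relabel_def by simp

lemma relabel_extensional: "relabel f \<in> extensional L'"
  unfolding relabel_def by simp

lemma relabel_Res1:
  assumes f: "f \<in> Res1 L le"
  shows "relabel f \<in> Res1 L' le'"
  unfolding Res1_def [of L' le']
proof (intro CollectI conjI ballI)
  show "relabel f \<in> L' \<rightarrow>\<^sub>E L'"
    using Res1_closed[OF f] relabel_extensional by (auto simp: relabel_apply PiE_iff)
  show "relabel f (ljoin L' le' x y) = ljoin L' le' (relabel f x) (relabel f y)"
    if xy: "x \<in> L'" "y \<in> L'" for x y
  proof -
    obtain x0 y0 where xy0: "x0 \<in> L" "y0 \<in> L" "x = j x0" "y = j y0"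
      using xy by blast
    have "relabel f (ljoin L' le' x y) = j (ljoin L le (f x0) (f y0))"
      using xy0 ljoin_relabel ljoin_closed Res1_ljoin[OF f] by (simp add: relabel_apply)
    also have "\<dots> = ljoin L' le' (relabel f x) (relabel f y)"
      using xy0 ljoin_relabel Res1_closed[OF f] by (simp add: relabel_apply)
    finally show ?thesis .
  qed
  show "relabel f (lbot L' le') = lbot L' le'"
    using Bot_in Res1_Bot[OF f] by (simp add: lbot_relabel relabel_apply)
  show "relabel f (ltop L' le') = ltop L' le'"
    using Top_in Res1_Top[OF f] by (simp add: ltop_relabel relabel_apply)
qed

lemma relabel_fjoin:
  "f \<in> Res1 L le \<Longrightarrow> h \<in> Res1 L le \<Longrightarrow> fjoin L' le' (relabel f) (relabel h) = relabel (fjoin L le f h)"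
  by (rule extensionalityI[OF fjoin_extensional relabel_extensional])
    (simp add: fjoin_apply relabel_apply ljoin_relabel Res1_closed)

lemma relabel_fcomp:
  "f \<in> Res1 L le \<Longrightarrow> h \<in> Res1 L le \<Longrightarrow> fcomp L' (relabel f) (relabel h) = relabel (fcomp L f h)"
  by (rule extensionalityI[OF fcomp_extensional relabel_extensional])
    (simp add: fcomp_apply relabel_apply Res1_closed)

lemma relabel_fab: "a \<in> L \<Longrightarrow> b \<in> L \<Longrightarrow> fab L' le' (j a) (j b) = relabel (fab L le a b)"
  by (rule extensionalityI[OF fab_extensional relabel_extensional])
    (simp add: L'.fab_apply fab_apply relabel_apply ltop_relabel)

lemma inj_on_relabel: "inj_on relabel (Res1 L le)"
proof (rule inj_onI)
  fix f h assume fh: "f \<in> Res1 L le" "h \<in> Res1 L le" "relabel f = relabel h"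
  show "f = h"
  proof (rule extensionalityI[OF Res1_extensional[OF fh(1)] Res1_extensional[OF fh(2)]])
    fix x assume x: "x \<in> L"
    have "relabel f (j x) = relabel h (j x)"
      using fh by simp
    then have "j (f x) = j (h x)"
      using x by (simp add: relabel_apply)
    then show "f x = h x"
      using inj_j Res1_closed fh x by (meson inj_onD)
  qed
qed

end

locale res_relabelling = res_subsemiring L le R + lattice_relabelling L le j
  for L :: "'b set" and le R and j :: "'b \<Rightarrow> 'c"
begin

lemma card_relabel: "card L' > 2"
  using card_carrier card_image[OF inj_j] by simp

lemma subsemiring_relabel: "subsemiring_Res1 L' le' (relabel ` R)"
  unfolding subsemiring_Res1_def
proof (intro conjI ballI)
  fix f' h' assume "f' \<in> relabel ` R" "h' \<in> relabel ` R"
  then obtain f h where "f \<in> R" "h \<in> R" "f' = relabel f" "h' = relabel h"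
    by blast
  then show "fjoin L' le' f' h' \<in> relabel ` R" "fcomp L' f' h' \<in> relabel ` R"
    using R_fjoin R_fcomp relabel_fjoin relabel_fcomp R_Res1 by auto
qed (use R_nonempty R_Res1 relabel_Res1 in auto)

lemma fab_in_relabel:
  assumes a': "a' \<in> L' - {ltop L' le'}"
  shows "fab L' le' a' (lbot L' le') \<in> relabel ` R"
proof -
  obtain a where "a \<in> L" "a \<noteq> Top" "a' = j a"
    using a' ltop_relabel by auto
  then show ?thesis
    using fab_in_R relabel_fab Bot_in lbot_relabel by auto
qed

lemma fab_below_relabel:
  assumes f': "f' \<in> relabel ` R"
  shows "\<exists>a'\<in>L' - {ltop L' le'}. \<forall>x\<in>L'. le' (fab L' le' a' (lbot L' le') x) (f' x)"
proof -
  obtain f where f: "f \<in> R" "f' = relabel f"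
    using f' by blast
  obtain a where a: "a \<in> L" "a \<noteq> Top" "\<forall>x\<in>L. le (fab L le a Bot x) (f x)"
    using fab_below[OF f(1)] by blast
  have "j a \<in> L' - {ltop L' le'}"
    using a(1,2) inj_j Top_in ltop_relabel by (auto dest: inj_onD)
  moreover have "le' (fab L' le' (j a) (lbot L' le') x) (f' x)" if x: "x \<in> L'" for x
  proof -
    have "fab L le a Bot (inv_into L j x) \<in> L" "f (inv_into L j x) \<in> L"
      using x R_closed[OF f(1)] Bot_in Top_in by (simp_all add: fab_apply)
    moreover have "fab L' le' (j a) (lbot L' le') x = j (fab L le a Bot (inv_into L j x))"
      using x a(1) Bot_in by (simp add: lbot_relabel relabel_fab relabel_apply)
    ultimately show ?thesis
      using x a(3) f(2) by (simp add: relabel_apply)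
  qed
  ultimately show ?thesis
    by blast
qed

lemma relabel_hits:
  assumes a': "a' \<in> L' - {lbot L' le', ltop L' le'}" and b': "b' \<in> L'"
  shows "\<exists>f'\<in>relabel ` R. f' a' = b'"
proof -
  obtain a where a: "a \<in> L" "a' = j a"
    using a' by blast
  then have "a \<noteq> Bot" "a \<noteq> Top"
    using a' lbot_relabel ltop_relabel by auto
  then obtain f where f: "f \<in> R" "f a = inv_into L j b'"
    using R_hits[OF a(1) _ _ inv_into_in[OF b']] by blast
  have "relabel f a' = b'"
    using a f(2) b' by (simp add: relabel_apply)
  then show ?thesis
    using f(1) by blast
qed

lemma good_pair_relabel: "good_pair L' le' (relabel ` R)"
  unfolding good_pair_def
  using finite_lattice_relabel card_relabel subsemiring_relabel fab_in_relabel fab_below_relabel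
    relabel_hits
  by (intro conjI ballI) simp_all

lemma semiring_iso_relabel:
  assumes iso: "semiring_iso \<phi> S add mul R (fjoin L le) (fcomp L)"
  shows "semiring_iso (relabel \<circ> \<phi>) S add mul (relabel ` R) (fjoin L' le') (fcomp L')"
  unfolding semiring_iso_def
proof (intro conjI ballI)
  have "bij_betw \<phi> S R"
    using iso unfolding semiring_iso_def by blast
  moreover have "bij_betw relabel R (relabel ` R)"
    using inj_on_subset[OF inj_on_relabel] R_Res1 by (blast intro: inj_on_imp_bij_betw)
  ultimately show "bij_betw (relabel \<circ> \<phi>) S (relabel ` R)"
    by (rule bij_betw_trans)
  fix x y assume xy: "x \<in> S" "y \<in> S"
  have "\<phi> x \<in> Res1 L le" "\<phi> y \<in> Res1 L le"
    using iso xy R_Res1 unfolding semiring_iso_def bij_betw_def by auto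
  then show "(relabel \<circ> \<phi>) (add x y) = fjoin L' le' ((relabel \<circ> \<phi>) x) ((relabel \<circ> \<phi>) y)"
    and "(relabel \<circ> \<phi>) (mul x y) = fcomp L' ((relabel \<circ> \<phi>) x) ((relabel \<circ> \<phi>) y)"
    using iso xy relabel_fjoin relabel_fcomp unfolding semiring_iso_def by simp_all
qed

end

lemma good_pair_iso_nat:
  fixes L :: "'b set"
  assumes good: "good_pair L le R" and iso: "semiring_iso \<phi> S add mul R (fjoin L le) (fcomp L)"
  shows "\<exists>(L' :: nat set) le' R' \<phi>'. good_pair L' le' R' \<and> semiring_iso \<phi>' S add mul R' (fjoin L' le') (fcomp L')"
proof -
  have "finite L"
    using good unfolding good_pair_def finite_lattice_on_def by blast
  then obtain j :: "'b \<Rightarrow> nat" where "inj_on j L"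
    using finite_imp_inj_to_nat_seg by blast
  with good interpret res_relabelling L le R j
    by (simp add: res_relabelling_def res_subsemiring_def lattice_relabelling_axioms_def
        lattice_relabelling_def fin_lattice_def good_pair_def)
  show ?thesis
    using good_pair_relabel semiring_iso_relabel[OF iso] by blast
qed

lemma (in res_subsemiring) finite_simple_semiring_R:
  "finite R \<and> semiring R (fjoin L le) (fcomp L) \<and> simple_semiring R (fjoin L le) (fcomp L) \<and>
    add_idempotent R (fjoin L le) \<and>
    (\<exists>g. greatest_elem R (fjoin L le) g \<and> right_absorbing R (fcomp L) g \<and> \<not> left_absorbing R (fcomp L) g)"
  using finite_R semiring_R simple_R add_idempotent_R greatest_f00 right_absorbing_f00
    not_left_absorbing_f00 by blast

lemma (in simple_ai_semiring) good_pair_representation: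
  "\<exists>(L :: nat set) le R \<phi>. good_pair L le R \<and> semiring_iso \<phi> S add mul R (fjoin L le) (fcomp L)"
  by (rule good_pair_iso_nat[OF good_pair_X semiring_iso_X])

theorem theorem5p2:
  shows "(\<forall>(L :: 'b set) le R. good_pair L le R \<longrightarrow>
            finite R \<and> semiring R (fjoin L le) (fcomp L) \<and>
            simple_semiring R (fjoin L le) (fcomp L) \<and>
            add_idempotent R (fjoin L le) \<and>
            (\<exists>g. greatest_elem R (fjoin L le) g \<and> right_absorbing R (fcomp L) g \<and>
                 \<not> left_absorbing R (fcomp L) g))
       \<and> (\<forall>(S :: 'a set) add mul.
            finite S \<and> card S > 2 \<and> semiring S add mul \<and> simple_semiring S add mul \<and>
            add_idempotent S add \<and>
            (\<exists>g. greatest_elem S add g \<and> right_absorbing S mul g \<and> \<not> left_absorbing S mul g)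
            \<longrightarrow> (\<exists>(L :: nat set) le R \<phi>. good_pair L le R \<and>
                   semiring_iso \<phi> S add mul R (fjoin L le) (fcomp L)))"
proof (rule conjI; intro allI impI)
  fix L :: "'b set" and le R
  assume "good_pair L le R"
  then show "finite R \<and> semiring R (fjoin L le) (fcomp L) \<and> simple_semiring R (fjoin L le) (fcomp L) \<and>
      add_idempotent R (fjoin L le) \<and>
      (\<exists>g. greatest_elem R (fjoin L le) g \<and> right_absorbing R (fcomp L) g \<and> \<not> left_absorbing R (fcomp L) g)"
    by (intro res_subsemiring.finite_simple_semiring_R res_subsemiring.intro)
next
  fix S :: "'a set" and add mul
  assume "finite S \<and> card S > 2 \<and> semiring S add mul \<and> simple_semiring S add mul \<and> add_idempotent S add \<and>
      (\<exists>g. greatest_elem S add g \<and> right_absorbing S mul g \<and> \<not> left_absorbing S mul g)"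
  then obtain g where "simple_ai_semiring S add mul g"
    unfolding simple_ai_semiring_def by blast
  then show "\<exists>(L :: nat set) le R \<phi>. good_pair L le R \<and> semiring_iso \<phi> S add mul R (fjoin L le) (fcomp L)"
    by (rule simple_ai_semiring.good_pair_representation)
qed

end
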